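(* Let $\Phi$ be a (Bourbaki) root system, $D$ a set of simple roots of $\Phi$, $J\subseteq D$, let $\pi_J\colon\mathbb Z\Phi\to\mathbb Z\Phi/\mathbb Z(D\setminus J)$ be the natural projection, and $\Phi_J=\pi_J(\Phi)\setminus\{0\}$. Then: (i) $\Phi_J$ is a regular root system in the sense of Ershov–Jaikin-Zapirain–Kassabov if and only if the rank of every irreducible component of $\Phi_J$ is $\ge 2$. (ii) For any $f\in F(\Phi_J)$ there exist a set of simple roots $D'$ of $\Phi$ and a subset $J'\subseteq D'$ with $\mathbb Z(D'\setminus J')\cap\Phi=\mathbb Z(D\setminus J)\cap\Phi$ and $(\Phi_J)_f=\pi_J(\Phi^{+'})\setminus\{0\}=\pi_{J'}(\Phi^{+'})\setminus\{0\}$, where $\Phi^{+'}$ is the set of positive roots with respect to $D'$. (iii) With $D',J'$ as in (ii), $(\Phi_J)_f\setminus C_f=\Phi_J\cap\bigcup_{\alpha\in\pi_J(J')}\mathbb N\alpha$.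
   Context: A root system in the sense of Ershov–Jaikin-Zapirain–Kassabov (EJZK) in a real vector space $E$ is a finite subset $\Phi$ spanning $E$, not containing $0$, closed under $\alpha\mapsto-\alpha$; its rank is $\dim E$. It is irreducible if it is not a disjoint union of two nonempty subsets whose $\mathbb R$-spans intersect trivially; it is regular if every root lies in an irreducible root subsystem of rank $2$. Here $\Phi_J$ is viewed in $E=\mathbb R\otimes\mathbb Z\Phi/\mathbb Z(D\setminus J)$. $F(\Phi_J)$ is the set of linear functionals $f\colon E\to\mathbb R$ with $f(\alpha)\neq0$ for all $\alpha\in\Phi_J$ and $f(\alpha)\ne f(\beta)$ for distinct $\alpha,\beta\in\Phi_J$; $(\Phi_J)_f=\{\alpha\in\Phi_J: f(\alpha)>0\}$ (a Borel subset). The core is $C_f=\{\alpha\in(\Phi_J)_f:\ \nexists g\in F(\Phi_J)\text{ with }\mathbb R\alpha=\mathbb R((\Phi_J)_f\cap(\Phi_J)_g)\}$. $\mathbb N\alpha$ denotes the positive integer multiples of $\alpha$. *)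

theory Defs
  imports "HOL-Analysis.Analysis"
begin

definition cartan :: "'a::euclidean_space \<Rightarrow> 'a \<Rightarrow> real" where
  "cartan \<beta> \<alpha> = 2 * (\<beta> \<bullet> \<alpha>) / (\<alpha> \<bullet> \<alpha>)"

definition root_refl :: "'a::euclidean_space \<Rightarrow> 'a \<Rightarrow> 'a" where
  "root_refl \<alpha> \<beta> = \<beta> - cartan \<beta> \<alpha> *\<^sub>R \<alpha>"

definition root_system :: "'a::euclidean_space set \<Rightarrow> bool" where
  "root_system \<Phi> \<longleftrightarrow> finite \<Phi> \<and> 0 \<notin> \<Phi> \<and> span \<Phi> = UNIV \<and>
     (\<forall>\<alpha>\<in>\<Phi>. \<forall>\<beta>\<in>\<Phi>. root_refl \<alpha> \<beta> \<in> \<Phi>) \<and>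
     (\<forall>\<alpha>\<in>\<Phi>. \<forall>\<beta>\<in>\<Phi>. cartan \<beta> \<alpha> \<in> \<int>)"

definition int_comb :: "'a::real_vector set \<Rightarrow> ('a \<Rightarrow> int) \<Rightarrow> 'a" where
  "int_comb D c = (\<Sum>d\<in>D. of_int (c d) *\<^sub>R d)"

definition simple_roots :: "'a::euclidean_space set \<Rightarrow> 'a set \<Rightarrow> bool" where
  "simple_roots \<Phi> D \<longleftrightarrow> D \<subseteq> \<Phi> \<and> independent D \<and>
     (\<forall>\<alpha>\<in>\<Phi>. \<exists>c. \<alpha> = int_comb D c \<and> ((\<forall>d\<in>D. c d \<ge> 0) \<or> (\<forall>d\<in>D. c d \<le> 0)))"

definition pos_roots :: "'a::euclidean_space set \<Rightarrow> 'a set \<Rightarrow> 'a set" where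
  "pos_roots \<Phi> D = {\<alpha>\<in>\<Phi>. \<exists>c. \<alpha> = int_comb D c \<and> (\<forall>d\<in>D. c d \<ge> 0)}"

definition int_span :: "'a::real_vector set \<Rightarrow> 'a set" where
  "int_span S = {x. \<exists>F c. finite F \<and> F \<subseteq> S \<and> x = int_comb F c}"

text \<open>We realise the quotient concretely: the natural projection modulo Z S is realised by the
orthogonal projection onto the orthogonal complement of the real span of S. When S = D - J for a
basis D of the root lattice, its kernel on Z Phi is exactly Z(D - J), so its image is canonically
isomorphic to Z Phi / Z(D - J), and the real span of the image is R (x) Z Phi / Z(D - J).\<close>
definition quot_proj :: "'a::euclidean_space set \<Rightarrow> 'a \<Rightarrow> 'a" where
  "quot_proj S v = (THE u. v - u \<in> span S \<and> (\<forall>w\<in>span S. u \<bullet> w = 0))"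

definition piJ :: "'a::euclidean_space set \<Rightarrow> 'a set \<Rightarrow> 'a \<Rightarrow> 'a" where
  "piJ D J = quot_proj (D - J)"

definition PhiJ :: "'a::euclidean_space set \<Rightarrow> 'a set \<Rightarrow> 'a set \<Rightarrow> 'a set" where
  "PhiJ \<Phi> D J = piJ D J ` \<Phi> - {0}"

text \<open>A finite set R of vectors is viewed as a root system in the space E = span R.\<close>
definition ejzk_root_system :: "'a::real_vector set \<Rightarrow> bool" where
  "ejzk_root_system R \<longleftrightarrow> finite R \<and> 0 \<notin> R \<and> (\<forall>\<alpha>\<in>R. - \<alpha> \<in> R)"

definition ejzk_rank :: "'a::euclidean_space set \<Rightarrow> nat" where
  "ejzk_rank R = dim (span R)"

definition ejzk_irreducible :: "'a::real_vector set \<Rightarrow> bool" where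
  "ejzk_irreducible R \<longleftrightarrow> \<not> (\<exists>A B. A \<noteq> {} \<and> B \<noteq> {} \<and> A \<inter> B = {} \<and> A \<union> B = R \<and>
       span A \<inter> span B = {0})"

definition ejzk_regular :: "'a::euclidean_space set \<Rightarrow> bool" where
  "ejzk_regular R \<longleftrightarrow> (\<forall>\<alpha>\<in>R. \<exists>S. S \<subseteq> R \<and> ejzk_root_system S \<and> \<alpha> \<in> S \<and>
       ejzk_irreducible S \<and> ejzk_rank S = 2)"

text \<open>Irreducible components: the nonempty irreducible pieces C of the (unique) decomposition
R = C_1 \<union> ... \<union> C_k with span R = direct sum of the span C_i; equivalently nonempty irreducible
subsets C with span C \<inter> span (R - C) = 0.\<close>
definition irr_component :: "'a::real_vector set \<Rightarrow> 'a set \<Rightarrow> bool" where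
  "irr_component R C \<longleftrightarrow> C \<noteq> {} \<and> C \<subseteq> R \<and> ejzk_irreducible C \<and> span C \<inter> span (R - C) = {0}"

text \<open>Linear functionals on E = span R are represented by linear functionals on the ambient
space (every functional on E extends; only the values on R matter).\<close>
definition Ffun :: "'a::real_vector set \<Rightarrow> ('a \<Rightarrow> real) set" where
  "Ffun R = {f. linear f \<and> (\<forall>\<alpha>\<in>R. f \<alpha> \<noteq> 0) \<and> inj_on f R}"

definition pos_part :: "'a::real_vector set \<Rightarrow> ('a \<Rightarrow> real) \<Rightarrow> 'a set" where
  "pos_part R f = {\<alpha>\<in>R. f \<alpha> > 0}"

definition core :: "'a::real_vector set \<Rightarrow> ('a \<Rightarrow> real) \<Rightarrow> 'a set" where
  "core R f = {\<alpha>\<in>pos_part R f. \<not> (\<exists>g\<in>Ffun R. span {\<alpha>} = span (pos_part R f \<inter> pos_part R g))}"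

definition nat_mults :: "'a::real_vector \<Rightarrow> 'a set" where
  "nat_mults \<alpha> = {of_nat k *\<^sub>R \<alpha> | k. k \<ge> 1}"

end

theory Submission
  imports Defs
begin

text \<open>
  (i) Let \<open>x\<close> be a projected root. If some root \<open>\<gamma>\<close> over the line of \<open>x\<close> is not orthogonal to
  some root \<open>\<delta>\<close> off that line, one may take \<open>\<gamma> + \<delta>\<close> to be a root, and the projections of
  \<open>\<gamma>\<close>, \<open>\<delta>\<close>, \<open>\<gamma> + \<delta>\<close> generate an irreducible subsystem of rank 2 through \<open>x\<close>. Otherwise the
  roots over the line, together with the kernel roots not orthogonal to them, are orthogonal to
  all remaining roots (reflections in kernel roots do not move projections), so the projected
  roots on the line form an irreducible component of rank 1. Conversely an irreducible subsystem
  meeting a component lies inside it.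

  (ii) Perturb \<open>f \<circ> \<pi>\<close> to a functional \<open>h\<close> that is nonzero on all roots and keeps the sign of
  \<open>f \<circ> \<pi>\<close> where it is nonzero. The indecomposable \<open>h\<close>-positive roots form a base \<open>D'\<close>; let
  \<open>J'\<close> be its elements outside the kernel of \<open>\<pi>\<close>.

  (iii) The positive projected roots are the nonzero nonnegative integral combinations of the
  linearly independent vectors \<open>\<pi>(J')\<close>. A functional \<open>g\<close> whose positive part meets that of \<open>f\<close>
  in a line is positive on some \<open>\<pi>(\<beta>)\<close> occurring in it, so the line is that of \<open>\<pi>(\<beta>)\<close>.
  Conversely, subtracting from \<open>f\<close> a large multiple of the functional counting the coefficients
  at \<open>J' - {\<alpha>}\<close> cuts the positive part down to the line of \<open>\<pi>(\<alpha>)\<close>.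
\<close>

lemma orthogonal_complement_decomp_unique:
  fixes S :: "'a::euclidean_space set"
  assumes "v - u \<in> span S" "\<forall>w\<in>span S. u \<bullet> w = 0"
    and "v - u' \<in> span S" "\<forall>w\<in>span S. u' \<bullet> w = 0"
  shows "u = u'"
proof -
  have "u - u' \<in> span S"
    using span_diff[OF assms(3) assms(1)] by (simp add: algebra_simps)
  then have "(u - u') \<bullet> (u - u') = 0"
    using assms(2,4) by (simp add: inner_diff_left)
  then show ?thesis by simp
qed

lemma quot_proj_char:
  fixes S :: "'a::euclidean_space set"
  shows "v - quot_proj S v \<in> span S \<and> (\<forall>w\<in>span S. quot_proj S v \<bullet> w = 0)"
proof -
  obtain y z where "y \<in> span S" "\<And>w. w \<in> span S \<Longrightarrow> orthogonal z w" "v = y + z"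
    using orthogonal_subspace_decomp_exists by blast
  then have "\<exists>u. v - u \<in> span S \<and> (\<forall>w\<in>span S. u \<bullet> w = 0)"
    by (intro exI[of _ z]) (auto simp: orthogonal_def)
  then have "\<exists>!u. v - u \<in> span S \<and> (\<forall>w\<in>span S. u \<bullet> w = 0)"
    using orthogonal_complement_decomp_unique by blast
  then show ?thesis unfolding quot_proj_def by (rule theI')
qed

lemma quot_proj_eqI:
  fixes S :: "'a::euclidean_space set"
  assumes "v - u \<in> span S" "\<forall>w\<in>span S. u \<bullet> w = 0"
  shows "quot_proj S v = u"
  using orthogonal_complement_decomp_unique[OF _ _ assms] quot_proj_char by blast

lemma linear_quot_proj:
  fixes S :: "'a::euclidean_space set"
  shows "linear (quot_proj S)"
proof (rule linearI)
  fix x y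
  show "quot_proj S (x + y) = quot_proj S x + quot_proj S y"
  proof (rule quot_proj_eqI)
    show "x + y - (quot_proj S x + quot_proj S y) \<in> span S"
      using span_add[OF conjunct1[OF quot_proj_char[of x S]] conjunct1[OF quot_proj_char[of y S]]]
      by (simp add: algebra_simps)
  qed (use quot_proj_char[of x S] quot_proj_char[of y S] in \<open>simp add: inner_add_left\<close>)
next
  fix c :: real and x
  show "quot_proj S (c *\<^sub>R x) = c *\<^sub>R quot_proj S x"
  proof (rule quot_proj_eqI)
    show "c *\<^sub>R x - c *\<^sub>R quot_proj S x \<in> span S"
      using span_scale[OF conjunct1[OF quot_proj_char[of x S]], of c] by (simp add: algebra_simps)
  qed (use quot_proj_char[of x S] in simp)
qed

lemma quot_proj_eq_0_iff:
  fixes S :: "'a::euclidean_space set"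
  shows "quot_proj S v = 0 \<longleftrightarrow> v \<in> span S"
  using quot_proj_char[of v S] quot_proj_eqI[of v 0 S] by auto

lemma quot_proj_cong: "span S = span T \<Longrightarrow> quot_proj S = quot_proj T"
  unfolding quot_proj_def by (rule ext) simp

section \<open>Perturbing linear functionals\<close>

lemma exists_small_scale:
  fixes a b :: "'b \<Rightarrow> real"
  assumes "finite U" "\<forall>u\<in>U. a u \<noteq> 0"
  shows "\<exists>t>0. \<forall>u\<in>U. \<bar>t * b u\<bar> < \<bar>a u\<bar>"
proof (cases "U = {}")
  case True
  then show ?thesis by (intro exI[of _ 1]) auto
next
  case False
  define t where "t = Min ((\<lambda>u. \<bar>a u\<bar> / (\<bar>b u\<bar> + 1)) ` U)"
  have t0: "t > 0" unfolding t_def using assms False by (subst Min_gr_iff) auto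
  have "\<bar>t * b u\<bar> < \<bar>a u\<bar>" if u: "u \<in> U" for u
  proof -
    have "t \<le> \<bar>a u\<bar> / (\<bar>b u\<bar> + 1)" unfolding t_def using u assms by (intro Min_le) auto
    then have "t * (\<bar>b u\<bar> + 1) \<le> \<bar>a u\<bar>" by (simp add: pos_le_divide_eq add_pos_nonneg)
    then have "t * \<bar>b u\<bar> < \<bar>a u\<bar>" using t0 by (simp add: algebra_simps)
    then show ?thesis using t0 by (simp add: abs_mult)
  qed
  then show ?thesis using t0 by blast
qed

lemma linear_add_scaled:
  fixes a b :: "'a::real_vector \<Rightarrow> real"
  shows "linear a \<Longrightarrow> linear b \<Longrightarrow> linear (\<lambda>v. a v + t * b v)"
  by (auto simp: linear_iff algebra_simps)

lemma exists_linear_nonvanishing: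
  fixes U :: "'a::real_inner set"
  assumes "finite U" "0 \<notin> U"
  shows "\<exists>k. linear k \<and> (\<forall>u\<in>U. k u \<noteq> (0::real))"
  using assms
proof (induction U rule: finite_induct)
  case empty
  then show ?case by (intro exI[of _ "\<lambda>_. 0"]) (simp add: linear_zero)
next
  case (insert x F)
  then obtain k where k: "linear k" "\<forall>u\<in>F. k u \<noteq> (0::real)" by auto
  show ?case
  proof (cases "k x = 0")
    case False
    then show ?thesis using k by auto
  next
    case True
    \<comment> \<open>add a multiple of \<open>x \<bullet> _\<close> small enough not to create zeros on \<open>F\<close>\<close>
    obtain t where t: "t > 0" "\<forall>u\<in>F. \<bar>t * (x \<bullet> u)\<bar> < \<bar>k u\<bar>"
      using exists_small_scale[OF insert(1) k(2), of "\<lambda>u. x \<bullet> u"] by blast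
    have "linear (\<lambda>v. k v + t * (x \<bullet> v))"
      using k(1) by (rule linear_add_scaled) (simp add: linear_iff inner_add_right)
    moreover have "k u + t * (x \<bullet> u) \<noteq> 0" if "u \<in> insert x F" for u
    proof (cases "u = x")
      case True
      then show ?thesis using \<open>k x = 0\<close> t(1) insert.prems by auto
    next
      case False
      then have "\<bar>t * (x \<bullet> u)\<bar> < \<bar>k u\<bar>" using that t(2) by auto
      then show ?thesis by linarith
    qed
    ultimately show ?thesis by blast
  qed
qed

lemma exists_generic_perturbation:
  fixes U :: "'a::real_inner set" and g0 :: "'a \<Rightarrow> real"
  assumes "finite U" "0 \<notin> U" "linear g0"
  shows "\<exists>g. linear g \<and> (\<forall>u\<in>U. g u \<noteq> (0::real)) \<and> (\<forall>u\<in>U. g0 u > 0 \<longrightarrow> g u > 0)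
     \<and> (\<forall>u\<in>U. g0 u < 0 \<longrightarrow> g u < 0)"
proof -
  obtain k where k: "linear k" "\<forall>u\<in>U. k u \<noteq> (0::real)"
    using exists_linear_nonvanishing[OF assms(1,2)] by blast
  have "\<exists>t>0. \<forall>u\<in>{u\<in>U. g0 u \<noteq> 0}. \<bar>t * k u\<bar> < \<bar>g0 u\<bar>"
    by (rule exists_small_scale) (use assms(1) in auto)
  then obtain t where t: "t > 0" "\<forall>u\<in>{u\<in>U. g0 u \<noteq> 0}. \<bar>t * k u\<bar> < \<bar>g0 u\<bar>"
    by blast
  have small: "\<bar>t * k u\<bar> < \<bar>g0 u\<bar>" if "u \<in> U" "g0 u \<noteq> 0" for u
    using that t(2) by blast
  have "g0 u + t * k u \<noteq> 0" if "u \<in> U" for u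
  proof (cases "g0 u = 0")
    case True
    then show ?thesis using that k(2) t(1) by simp
  next
    case False
    then show ?thesis using small[OF that] by linarith
  qed
  moreover have "g0 u + t * k u > 0" if "u \<in> U" "g0 u > 0" for u
    using small[of u] that by linarith
  moreover have "g0 u + t * k u < 0" if "u \<in> U" "g0 u < 0" for u
    using small[of u] that by linarith
  moreover have "linear (\<lambda>v. g0 v + t * k v)" using assms(3) k(1) by (rule linear_add_scaled)
  ultimately show ?thesis by (intro exI[of _ "\<lambda>v. g0 v + t * k v"]) simp
qed

lemma Ffun_linear: "g \<in> Ffun R \<Longrightarrow> linear g"
  and Ffun_nonzero: "g \<in> Ffun R \<Longrightarrow> y \<in> R \<Longrightarrow> g y \<noteq> 0"
  unfolding Ffun_def by auto

text \<open>Perturb on \<open>R\<close> together with all differences of elements of \<open>R\<close>; the latter gives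
  injectivity on \<open>R\<close>.\<close>
lemma exists_Ffun_perturbation:
  fixes R :: "'a::real_inner set" and g0 :: "'a \<Rightarrow> real"
  assumes "finite R" "0 \<notin> R" "linear g0"
  shows "\<exists>g\<in>Ffun R. (\<forall>y\<in>R. g0 y > 0 \<longrightarrow> g y > 0) \<and> (\<forall>y\<in>R. g0 y < 0 \<longrightarrow> g y < 0)"
proof -
  define \<Delta> where "\<Delta> = (\<lambda>p. fst p - snd p) ` {p \<in> R \<times> R. fst p \<noteq> snd p}"
  define U where "U = R \<union> \<Delta>"
  have "finite \<Delta>" unfolding \<Delta>_def
    by (intro finite_imageI finite_subset[OF _ finite_cartesian_product[OF assms(1) assms(1)]]) auto
  then have "finite U" unfolding U_def using assms(1) by blast
  moreover have "0 \<notin> U" unfolding U_def \<Delta>_def using assms(2) by auto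
  ultimately obtain g :: "'a \<Rightarrow> real" where g: "linear g" "\<forall>u\<in>U. g u \<noteq> 0" "\<forall>u\<in>U. g0 u > 0 \<longrightarrow> g u > 0"
    "\<forall>u\<in>U. g0 u < 0 \<longrightarrow> g u < 0"
    using exists_generic_perturbation[OF _ _ assms(3)] by blast
  have "inj_on g R"
  proof (rule inj_onI, rule ccontr)
    fix y z assume "y \<in> R" "z \<in> R" "g y = g z" "y \<noteq> z"
    then have "y - z \<in> U" unfolding U_def \<Delta>_def by (intro UnI2 image_eqI[of _ _ "(y, z)"]) auto
    then show False using g(2) linear_diff[OF g(1)] \<open>g y = g z\<close> by auto
  qed
  then have "g \<in> Ffun R" using g(1,2) unfolding Ffun_def U_def by blast
  moreover have "\<forall>y\<in>R. g0 y > 0 \<longrightarrow> g y > 0" "\<forall>y\<in>R. g0 y < 0 \<longrightarrow> g y < 0"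
    using g(3,4) unfolding U_def by blast+
  ultimately show ?thesis by blast
qed

lemma root_system_finite: "root_system \<Phi> \<Longrightarrow> finite \<Phi>"
  and root_system_nonzero: "root_system \<Phi> \<Longrightarrow> 0 \<notin> \<Phi>"
  and root_system_root_refl: "root_system \<Phi> \<Longrightarrow> \<alpha> \<in> \<Phi> \<Longrightarrow> \<beta> \<in> \<Phi> \<Longrightarrow> root_refl \<alpha> \<beta> \<in> \<Phi>"
  and root_system_cartan_Ints: "root_system \<Phi> \<Longrightarrow> \<alpha> \<in> \<Phi> \<Longrightarrow> \<beta> \<in> \<Phi> \<Longrightarrow> cartan \<beta> \<alpha> \<in> \<int>"
  unfolding root_system_def by auto

lemma root_system_uminus:
  assumes "root_system \<Phi>" "\<alpha> \<in> \<Phi>"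
  shows "- \<alpha> \<in> \<Phi>"
proof -
  have "root_refl \<alpha> \<alpha> = - \<alpha>"
    using assms root_system_nonzero by (auto simp: root_refl_def cartan_def scaleR_2 algebra_simps)
  then show ?thesis using root_system_root_refl[OF assms(1,2,2)] by simp
qed

lemma inner_square_less_if_not_parallel:
  fixes \<alpha> \<beta> :: "'a::euclidean_space"
  assumes "\<alpha> \<noteq> 0" "\<beta> \<notin> span {\<alpha>}"
  shows "(\<alpha> \<bullet> \<beta>)^2 < (\<alpha> \<bullet> \<alpha>) * (\<beta> \<bullet> \<beta>)"
proof -
  have "\<bar>\<alpha> \<bullet> \<beta>\<bar> \<noteq> norm \<alpha> * norm \<beta>"
  proof
    assume "\<bar>\<alpha> \<bullet> \<beta>\<bar> = norm \<alpha> * norm \<beta>"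
    then have "norm \<alpha> *\<^sub>R \<beta> = norm \<beta> *\<^sub>R \<alpha> \<or> norm \<alpha> *\<^sub>R \<beta> = - norm \<beta> *\<^sub>R \<alpha>"
      using norm_cauchy_schwarz_abs_eq by blast
    then have "norm \<alpha> *\<^sub>R \<beta> \<in> span {\<alpha>}" by (metis span_base span_scale singletonI)
    then have "(1 / norm \<alpha>) *\<^sub>R (norm \<alpha> *\<^sub>R \<beta>) \<in> span {\<alpha>}" by (rule span_scale)
    then show False using assms by simp
  qed
  then have "\<bar>\<alpha> \<bullet> \<beta>\<bar> < norm \<alpha> * norm \<beta>" using Cauchy_Schwarz_ineq2[of \<alpha> \<beta>] by linarith
  then have "\<bar>\<alpha> \<bullet> \<beta>\<bar>^2 < (norm \<alpha> * norm \<beta>)^2" by (intro power_strict_mono) auto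
  then show ?thesis by (simp add: power_mult_distrib power2_norm_eq_inner)
qed

lemma Ints_pos_mult_less_4:
  fixes a b :: real
  assumes "a \<in> \<int>" "b \<in> \<int>" "a > 0" "b > 0" "a * b < 4"
  shows "a = 1 \<or> b = 1"
proof -
  obtain m n where mn: "a = of_int m" "b = of_int n" using assms(1,2) Ints_cases by metis
  have "m \<ge> 1" "n \<ge> 1" using assms(3,4) mn by auto
  moreover have "m * n < 4" using assms(5) mn by (simp flip: of_int_mult)
  moreover have "2 * 2 \<le> m * n" if "m \<ge> 2" "n \<ge> 2" using that by (intro mult_mono) auto
  ultimately have "m = 1 \<or> n = 1" by linarith
  then show ?thesis using mn by auto
qed

text \<open>By strict Cauchy--Schwarz the product of the two Cartan numbers is a positive integer
  below 4, so one of them is 1.\<close>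
lemma root_diff_mem:
  assumes rs: "root_system \<Phi>" and a: "\<alpha> \<in> \<Phi>" and b: "\<beta> \<in> \<Phi>"
    and np: "\<beta> \<notin> span {\<alpha>}" and pos: "\<alpha> \<bullet> \<beta> > 0"
  shows "\<alpha> - \<beta> \<in> \<Phi>"
proof -
  have a0: "\<alpha> \<noteq> 0" and b0: "\<beta> \<noteq> 0" using rs a b root_system_nonzero by blast+
  have aa: "\<alpha> \<bullet> \<alpha> > 0" and bb: "\<beta> \<bullet> \<beta> > 0" using a0 b0 by auto
  define x y where "x = cartan \<alpha> \<beta>" and "y = cartan \<beta> \<alpha>"
  have "x \<in> \<int>" "y \<in> \<int>" unfolding x_def y_def using root_system_cartan_Ints[OF rs] a b by auto
  moreover have "x > 0" "y > 0" unfolding x_def y_def cartan_def using aa bb pos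
    by (auto simp: inner_commute)
  moreover have "x * y = 4 * (\<alpha> \<bullet> \<beta>)^2 / ((\<alpha> \<bullet> \<alpha>) * (\<beta> \<bullet> \<beta>))"
    unfolding x_def y_def cartan_def by (simp add: inner_commute power2_eq_square)
  moreover have "\<dots> < 4"
    using inner_square_less_if_not_parallel[OF a0 np] aa bb by (simp add: divide_less_eq)
  ultimately have "x = 1 \<or> y = 1" by (intro Ints_pos_mult_less_4) auto
  then have "cartan \<alpha> \<beta> = 1 \<or> cartan \<beta> \<alpha> = 1" unfolding x_def y_def .
  then show ?thesis
  proof
    assume "cartan \<alpha> \<beta> = 1"
    then show ?thesis using root_system_root_refl[OF rs b a] by (simp add: root_refl_def)
  next
    assume "cartan \<beta> \<alpha> = 1"
    then have "\<beta> - \<alpha> \<in> \<Phi>" using root_system_root_refl[OF rs a b] by (simp add: root_refl_def)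
    from root_system_uminus[OF rs this] show ?thesis by simp
  qed
qed

lemma root_add_mem:
  assumes rs: "root_system \<Phi>" and "\<alpha> \<in> \<Phi>" "\<beta> \<in> \<Phi>" "\<beta> \<notin> span {\<alpha>}" "\<alpha> \<bullet> \<beta> < 0"
  shows "\<alpha> + \<beta> \<in> \<Phi>"
proof -
  have "- \<beta> \<notin> span {\<alpha>}" using assms(4) span_neg by fastforce
  from root_diff_mem[OF rs assms(2) root_system_uminus[OF rs assms(3)] this] assms(5)
  show ?thesis by simp
qed

lemma root_multiple_cases:
  assumes rs: "root_system \<Phi>" and "\<alpha> \<in> \<Phi>" "c *\<^sub>R \<alpha> \<in> \<Phi>" "c > 0" "c \<noteq> 1"
  shows "c = 2 \<or> c = 1/2"
proof -
  have "\<alpha> \<noteq> 0" using assms(1,2) root_system_nonzero by blast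
  then have "cartan (c *\<^sub>R \<alpha>) \<alpha> = 2 * c" "cartan \<alpha> (c *\<^sub>R \<alpha>) = 2 / c"
    using assms(4) by (simp_all add: cartan_def)
  then have "2 * c \<in> \<int>" "2 / c \<in> \<int>" using root_system_cartan_Ints[OF rs] assms(2,3) by metis+
  then obtain m n where m: "2 * c = of_int m" and n: "2 / c = of_int n" using Ints_cases by metis
  have "of_int m * of_int n = (2 * c) * (2 / c)" using m n by simp
  also have "\<dots> = 4" using assms(4) by simp
  finally have mn: "m * n = 4" by (simp flip: of_int_mult)
  have "m > 0" using m assms(4) by linarith
  have "m dvd 4" using mn by (metis dvd_triv_left)
  then have "m \<le> 4" by (rule zdvd_imp_le) simp
  moreover have "m \<noteq> 3"
  proof
    assume "m = 3"
    then have "3 * n = 4" using mn by simp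
    then show False by presburger
  qed
  ultimately have "m = 1 \<or> m = 2 \<or> m = 4" using \<open>m > 0\<close> by presburger
  then show ?thesis using m assms(5) by auto
qed

section \<open>Simple roots from a generic functional\<close>

lemma int_comb_add: "int_comb D (\<lambda>d. c1 d + c2 d) = int_comb D c1 + int_comb D c2"
  unfolding int_comb_def by (simp add: scaleR_add_left sum.distrib)

lemma int_comb_uminus: "int_comb D (\<lambda>d. - c d) = - int_comb D c"
  unfolding int_comb_def by (simp add: sum_negf)

lemma int_comb_indicator:
  assumes "finite D" "x \<in> D"
  shows "int_comb D (\<lambda>d. if d = x then 1 else 0) = x"
proof -
  have "int_comb D (\<lambda>d. if d = x then 1 else 0) = (\<Sum>d\<in>D. if d = x then d else 0)"
    unfolding int_comb_def by (rule sum.cong) auto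
  also have "\<dots> = x" using assms by simp
  finally show ?thesis .
qed

lemma linear_int_comb: "linear f \<Longrightarrow> f (int_comb D c) = (\<Sum>d\<in>D. of_int (c d) *\<^sub>R f d)"
  unfolding int_comb_def by (simp add: linear_sum linear_scale)

lemma obtuse_combinations_eq_0:
  fixes P N :: "'a::real_inner set"
  assumes "finite P" "finite N" "(\<Sum>p\<in>P. a p *\<^sub>R p) = (\<Sum>q\<in>N. b q *\<^sub>R q)"
    and "\<And>p q. p \<in> P \<Longrightarrow> q \<in> N \<Longrightarrow> p \<bullet> q \<le> 0"
    and "\<And>p. p \<in> P \<Longrightarrow> a p \<ge> 0" "\<And>q. q \<in> N \<Longrightarrow> b q \<ge> 0"
  shows "(\<Sum>p\<in>P. a p *\<^sub>R p) = 0"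
proof -
  define s where "s = (\<Sum>p\<in>P. a p *\<^sub>R p)"
  have "s \<bullet> s = (\<Sum>p\<in>P. a p *\<^sub>R p) \<bullet> (\<Sum>q\<in>N. b q *\<^sub>R q)"
    using assms(3) by (simp add: s_def)
  also have "\<dots> = (\<Sum>p\<in>P. \<Sum>q\<in>N. (a p * b q) * (p \<bullet> q))"
    by (subst sum.swap) (simp add: inner_sum_left inner_sum_right inner_commute mult_ac)
  also have "\<dots> \<le> 0"
    using assms(4-6) by (intro sum_nonpos mult_nonneg_nonpos) auto
  finally show ?thesis unfolding s_def[symmetric] by (metis inner_gt_zero_iff not_le)
qed

text \<open>The positive and negative parts of a dependence are equal obtuse combinations, hence
  zero, while \<open>h\<close> is positive on them.\<close>
lemma independent_if_pairwise_obtuse: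
  fixes V :: "'a::euclidean_space set" and h :: "'a \<Rightarrow> real"
  assumes fin: "finite V" and lh: "linear h" and pos: "\<And>v. v \<in> V \<Longrightarrow> h v > 0"
    and obtuse: "\<And>v w. v \<in> V \<Longrightarrow> w \<in> V \<Longrightarrow> v \<noteq> w \<Longrightarrow> v \<bullet> w \<le> 0"
  shows "independent V"
  unfolding independent_explicit
proof (intro conjI allI impI ballI fin)
  fix c v assume sum0: "(\<Sum>v\<in>V. c v *\<^sub>R v) = 0" and v: "v \<in> V"
  define P N where "P = {v\<in>V. c v > 0}" and "N = {v\<in>V. c v < 0}"
  have finPN: "finite P" "finite N" unfolding P_def N_def using fin by simp_all
  have "(\<Sum>v\<in>V. c v *\<^sub>R v) = (\<Sum>v\<in>P \<union> N. c v *\<^sub>R v)"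
    by (rule sum.mono_neutral_right) (use fin in \<open>auto simp: P_def N_def\<close>)
  also have "\<dots> = (\<Sum>v\<in>P. c v *\<^sub>R v) + (\<Sum>v\<in>N. c v *\<^sub>R v)"
    by (rule sum.union_disjoint[OF finPN]) (auto simp: P_def N_def)
  finally have split: "(\<Sum>v\<in>P. c v *\<^sub>R v) = (\<Sum>v\<in>N. (- c v) *\<^sub>R v)"
    using sum0 by (simp add: sum_negf eq_neg_iff_add_eq_0)
  define s where "s = (\<Sum>v\<in>P. c v *\<^sub>R v)"
  have s0: "s = 0" unfolding s_def
    using finPN split by (rule obtuse_combinations_eq_0) (auto simp: P_def N_def intro: obtuse)
  have "P = {}"
  proof (rule ccontr)
    assume "P \<noteq> {}"
    have "h s = (\<Sum>v\<in>P. c v * h v)" unfolding s_def by (simp add: linear_sum[OF lh] linear_scale[OF lh])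
    also have "\<dots> > 0" using \<open>P \<noteq> {}\<close> finPN pos unfolding P_def by (intro sum_pos) auto
    finally show False using s0 linear_0[OF lh] by simp
  qed
  moreover have "N = {}"
  proof (rule ccontr)
    assume "N \<noteq> {}"
    have "h s = (\<Sum>v\<in>N. (- c v) * h v)"
      unfolding s_def split by (simp add: linear_sum[OF lh] linear_scale[OF lh] del: scaleR_minus_left)
    also have "\<dots> > 0" using \<open>N \<noteq> {}\<close> finPN pos unfolding N_def
      by (intro sum_pos) (auto simp: mult_neg_pos)
    finally show False using s0 linear_0[OF lh] by simp
  qed
  ultimately show "c v = 0" using v unfolding P_def N_def by force
qed

locale generic_functional =
  fixes \<Phi> :: "'a::euclidean_space set" and h :: "'a \<Rightarrow> real"
  assumes root_system: "root_system \<Phi>" and linear_h: "linear h"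
    and h_nonzero: "\<And>\<gamma>. \<gamma> \<in> \<Phi> \<Longrightarrow> h \<gamma> \<noteq> 0"
begin

definition Pos :: "'a set" where
  "Pos = {\<gamma>\<in>\<Phi>. h \<gamma> > 0}"

definition Base :: "'a set" where
  "Base = {\<gamma>\<in>Pos. \<not> (\<exists>a\<in>Pos. \<exists>b\<in>Pos. \<gamma> = a + b)}"

lemma finite_Pos: "finite Pos"
  unfolding Pos_def using root_system_finite[OF root_system] by simp

lemma finite_Base: "finite Base"
  unfolding Base_def using finite_Pos by simp

lemma Base_subset_Pos: "Base \<subseteq> Pos"
  unfolding Base_def by auto

lemma Pos_subset: "Pos \<subseteq> \<Phi>"
  unfolding Pos_def by auto

lemma Pos_nonneg_int_comb:
  "\<gamma> \<in> Pos \<Longrightarrow> \<exists>c. \<gamma> = int_comb Base c \<and> (\<forall>d\<in>Base. c d \<ge> 0)"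
proof (induction "card {\<rho>\<in>Pos. h \<rho> < h \<gamma>}" arbitrary: \<gamma> rule: less_induct)
  case less
  show ?case
  proof (cases "\<gamma> \<in> Base")
    case True
    then show ?thesis
      by (intro exI[of _ "\<lambda>d. if d = \<gamma> then 1 else 0"]) (simp add: int_comb_indicator finite_Base)
  next
    case False
    then obtain a b where ab: "a \<in> Pos" "b \<in> Pos" "\<gamma> = a + b"
      using less.prems unfolding Base_def by auto
    have smaller: "card {\<rho>\<in>Pos. h \<rho> < h x} < card {\<rho>\<in>Pos. h \<rho> < h \<gamma>}"
      if "x \<in> Pos" "h x < h \<gamma>" for x
      using that by (intro psubset_card_mono) (auto simp: finite_Pos)
    have "h a < h \<gamma>" "h b < h \<gamma>"
      using ab linear_add[OF linear_h] unfolding Pos_def by auto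
    then obtain ca cb where "a = int_comb Base ca" "\<forall>d\<in>Base. ca d \<ge> 0"
      "b = int_comb Base cb" "\<forall>d\<in>Base. cb d \<ge> 0"
      using less.hyps[OF smaller] ab by meson
    then show ?thesis
      using ab by (intro exI[of _ "\<lambda>d. ca d + cb d"]) (simp add: int_comb_add)
  qed
qed

lemma Base_pairwise_obtuse:
  assumes a: "\<alpha> \<in> Base" and b: "\<beta> \<in> Base" and ne: "\<alpha> \<noteq> \<beta>"
  shows "\<alpha> \<bullet> \<beta> \<le> 0"
proof (rule ccontr)
  assume "\<not> \<alpha> \<bullet> \<beta> \<le> 0"
  then have pos: "\<alpha> \<bullet> \<beta> > 0" by simp
  have aP: "\<alpha> \<in> Pos" "\<beta> \<in> Pos" using a b Base_subset_Pos by auto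
  then have aPhi: "\<alpha> \<in> \<Phi>" "\<beta> \<in> \<Phi>" and ha: "h \<alpha> > 0" "h \<beta> > 0"
    unfolding Pos_def by auto
  have decomposable: "\<gamma> \<notin> Base" if "\<gamma> = x + y" "x \<in> Pos" "y \<in> Pos" for \<gamma> x y
    using that unfolding Base_def by blast
  show False
  proof (cases "\<beta> \<in> span {\<alpha>}")
    case True
    then obtain c where c: "\<beta> = c *\<^sub>R \<alpha>" by (auto simp: span_singleton)
    have "c > 0" using ha c linear_scale[OF linear_h] by (simp add: zero_less_mult_iff)
    moreover have "c \<noteq> 1" using c ne by auto
    ultimately have "c = 2 \<or> c = 1/2" using root_multiple_cases[OF root_system aPhi(1)] c aPhi(2) by blast
    then have "\<beta> = \<alpha> + \<alpha> \<or> \<alpha> = \<beta> + \<beta>"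
    proof
      assume "c = 2"
      then show ?thesis by (simp add: c scaleR_2)
    next
      assume "c = 1/2"
      then have "\<beta> = (1/2) *\<^sub>R \<alpha>" using c by simp
      then have "\<beta> + \<beta> = \<alpha>" by (simp flip: scaleR_add_left)
      then show ?thesis by simp
    qed
    then show False using decomposable a b aP by blast
  next
    case False
    have d: "\<alpha> - \<beta> \<in> \<Phi>" "\<beta> - \<alpha> \<in> \<Phi>"
      using root_diff_mem[OF root_system aPhi False pos] root_system_uminus[OF root_system] by force+
    have "h (\<alpha> - \<beta>) \<noteq> 0" using h_nonzero[OF d(1)] .
    then have "\<alpha> - \<beta> \<in> Pos \<or> \<beta> - \<alpha> \<in> Pos"
      using d linear_diff[OF linear_h] unfolding Pos_def by auto
    moreover have "\<alpha> = (\<alpha> - \<beta>) + \<beta>" "\<beta> = (\<beta> - \<alpha>) + \<alpha>" by simp_all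
    ultimately show False using decomposable a b aP by metis
  qed
qed

lemma independent_Base: "independent Base"
  using finite_Base linear_h
proof (rule independent_if_pairwise_obtuse)
  show "h v > 0" if "v \<in> Base" for v using that Base_subset_Pos unfolding Pos_def by auto
qed (rule Base_pairwise_obtuse)

lemma pos_roots_Base: "pos_roots \<Phi> Base = Pos"
proof
  show "Pos \<subseteq> pos_roots \<Phi> Base"
    using Pos_nonneg_int_comb Pos_subset unfolding pos_roots_def by auto
next
  show "pos_roots \<Phi> Base \<subseteq> Pos"
  proof
    fix \<gamma> assume "\<gamma> \<in> pos_roots \<Phi> Base"
    then obtain c where g: "\<gamma> \<in> \<Phi>" "\<gamma> = int_comb Base c" "\<forall>d\<in>Base. c d \<ge> 0"
      unfolding pos_roots_def by auto
    have "h \<gamma> = (\<Sum>d\<in>Base. of_int (c d) * h d)" using g linear_int_comb[OF linear_h] by simp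
    also have "\<dots> \<ge> 0" using g(3) Base_subset_Pos unfolding Pos_def by (intro sum_nonneg) auto
    finally show "\<gamma> \<in> Pos" using h_nonzero[OF g(1)] g(1) unfolding Pos_def by auto
  qed
qed

lemma simple_roots_Base: "simple_roots \<Phi> Base"
  unfolding simple_roots_def
proof (intro conjI ballI independent_Base)
  show "Base \<subseteq> \<Phi>" using Base_subset_Pos Pos_subset by auto
next
  fix \<alpha> assume a: "\<alpha> \<in> \<Phi>"
  show "\<exists>c. \<alpha> = int_comb Base c \<and> ((\<forall>d\<in>Base. 0 \<le> c d) \<or> (\<forall>d\<in>Base. c d \<le> 0))"
  proof (cases "h \<alpha> > 0")
    case True
    then show ?thesis using Pos_nonneg_int_comb a unfolding Pos_def by blast
  next
    case False
    then have "- \<alpha> \<in> Pos"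
      using h_nonzero[OF a] linear_neg[OF linear_h] root_system_uminus[OF root_system a]
      unfolding Pos_def by auto
    then obtain c where c: "- \<alpha> = int_comb Base c" "\<forall>d\<in>Base. c d \<ge> 0"
      using Pos_nonneg_int_comb by blast
    then have "\<alpha> = int_comb Base (\<lambda>d. - c d)" by (metis int_comb_uminus minus_minus)
    then show ?thesis using c(2) by (intro exI[of _ "\<lambda>d. - c d"]) auto
  qed
qed

end

lemma in_span_singleton_if_dim_le_1:
  fixes T :: "'a::euclidean_space set"
  assumes "dim (span T) \<le> 1" "a \<in> T" "a \<noteq> 0" "b \<in> T"
  shows "b \<in> span {a}"
proof (rule ccontr)
  assume nb: "b \<notin> span {a}"
  then have "b \<noteq> a" using span_base[of a "{a}"] by auto
  have "independent {b, a}" using nb assms(3)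
    by (intro independent_insertI) (auto simp: independent_insert independent_empty)
  then have "card {b, a} \<le> dim (span T)"
    using assms(2,4) by (intro independent_card_le_dim) (auto intro: span_base)
  then show False using \<open>b \<noteq> a\<close> assms(1) by simp
qed

lemma ejzk_irreducible_if_subset_line:
  fixes T :: "'a::real_vector set"
  assumes "T \<subseteq> span {x}" "0 \<notin> T"
  shows "ejzk_irreducible T"
  unfolding ejzk_irreducible_def
proof (intro notI, elim exE conjE)
  fix A B assume AB: "A \<noteq> {}" "B \<noteq> {}" "A \<union> B = T" "span A \<inter> span B = {0}"
  obtain a b where ab: "a \<in> A" "b \<in> B" using AB(1,2) by blast
  then have "a \<in> span {x}" "b \<in> span {x}" using assms(1) AB(3) by auto
  then obtain s t where "a = s *\<^sub>R x" "b = t *\<^sub>R x" unfolding span_singleton by blast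
  moreover have "a \<noteq> 0" "b \<noteq> 0" using ab assms(2) AB(3) by auto
  ultimately have "b = (t / s) *\<^sub>R a" by auto
  then have "b \<in> span A \<inter> span B" using ab by (auto intro: span_base span_scale)
  then show False using AB(4) \<open>b \<noteq> 0\<close> by blast
qed

lemma ejzk_irreducible_if_three_nonparallel:
  fixes S :: "'a::euclidean_space set"
  assumes d2: "dim (span S) = 2" and S0: "0 \<notin> S" and uvw: "u \<in> S" "v \<in> S" "w \<in> S"
    and np: "v \<notin> span {u}" "w \<notin> span {u}" "w \<notin> span {v}"
  shows "ejzk_irreducible S"
  unfolding ejzk_irreducible_def
proof (intro notI, elim exE conjE)
  fix A B assume AB: "A \<noteq> {}" "B \<noteq> {}" "A \<union> B = S" "span A \<inter> span B = {0}"
  have "dim {x + y |x y. x \<in> span A \<and> y \<in> span B} + dim (span A \<inter> span B)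
      = dim (span A) + dim (span B)"
    by (rule dim_sums_Int) auto
  then have sum: "dim (span A) + dim (span B) = 2" using AB(3,4) d2 by (simp flip: span_Un)
  have "dim (span T) \<noteq> 0" if T: "T \<noteq> {}" "T \<subseteq> S" for T
  proof -
    obtain a where "a \<in> T" using T by blast
    then have "a \<noteq> 0" "a \<in> span T" using T S0 span_base by auto
    then show ?thesis using dim_eq_0[of "span T"] by blast
  qed
  then have "dim (span A) \<noteq> 0" "dim (span B) \<noteq> 0" using AB(1-3) by auto
  then have one: "dim (span A) \<le> 1" "dim (span B) \<le> 1" using sum by linarith+
  have apart: "\<not> (p \<in> T \<and> q \<in> T)" if "T = A \<or> T = B" "p \<in> S" "q \<notin> span {p}" for T p q
  proof
    assume "p \<in> T \<and> q \<in> T"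
    moreover have "dim (span T) \<le> 1" using that(1) one by blast
    ultimately show False using in_span_singleton_if_dim_le_1[of T p q] that(2,3) S0 by auto
  qed
  have "u \<in> A \<or> u \<in> B" "v \<in> A \<or> v \<in> B" "w \<in> A \<or> w \<in> B" using uvw AB(3) by auto
  then show False
    using apart[of A u v] apart[of B u v] apart[of A u w] apart[of B u w] apart[of A v w]
      apart[of B v w] uvw np by blast
qed

text \<open>Irreducible because \<open>u\<close>, \<open>y\<close> and \<open>u + y\<close> are pairwise non-proportional.\<close>
lemma ejzk_rank2_irreducible_closure:
  fixes x u y :: "'a::euclidean_space"
  assumes x: "x \<noteq> 0" and u: "u \<in> span {x}" "u \<noteq> 0" and y: "y \<notin> span {x}"
  defines "S \<equiv> {x, -x, u, -u, y, -y, u + y, -(u + y)}"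
  shows "ejzk_root_system S \<and> ejzk_irreducible S \<and> ejzk_rank S = 2"
proof -
  have span_u: "span {u} \<subseteq> span {x}" using u(1) by (intro span_minimal) auto
  have uy: "u + y \<notin> span {x}"
    using y u(1) span_diff[of "u + y" "{x}" u] by auto
  have "y \<noteq> 0" "u + y \<noteq> 0" using y uy span_zero[of "{x}"] by auto
  then have S0: "0 \<notin> S" using x u(2) unfolding S_def by auto
  have "independent {y, x}" using y x
    by (intro independent_insertI) (auto simp: independent_insert independent_empty)
  moreover have "y \<noteq> x" using y span_base[of x "{x}"] by auto
  ultimately have "dim {y, x} = 2" using dim_eq_card_independent by fastforce
  moreover have "dim S \<le> dim {y, x}"
  proof (rule dim_mono)
    have xyu: "x \<in> span {y, x}" "y \<in> span {y, x}" "u \<in> span {y, x}"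
      using u(1) span_mono[of "{x}" "{y, x}"] by (auto intro: span_base)
    note uy = span_add[OF xyu(3) xyu(2)]
    show "S \<subseteq> span {y, x}"
      unfolding S_def using xyu uy span_neg[OF xyu(1)] span_neg[OF xyu(2)] span_neg[OF xyu(3)]
        span_neg[OF uy] by blast
  qed
  moreover have "dim {y, x} \<le> dim S" by (rule dim_subset) (auto simp: S_def)
  ultimately have dS: "dim (span S) = 2" by simp
  have "y \<notin> span {u}" "u + y \<notin> span {u}" using y uy span_u by auto
  moreover have "u + y \<notin> span {y}"
  proof
    assume "u + y \<in> span {y}"
    then have "u \<in> span {y}" using span_diff[of "u + y" "{y}" y] by (auto intro: span_base)
    then obtain t where "u = t *\<^sub>R y" unfolding span_singleton by blast
    with u(2) have "y = (1 / t) *\<^sub>R u" by auto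
    then show False using y span_scale[OF u(1), of "1 / t"] by simp
  qed
  ultimately have "ejzk_irreducible S"
    by (intro ejzk_irreducible_if_three_nonparallel[OF dS S0, where u = u and v = y and w = "u + y"])
      (auto simp: S_def)
  moreover have "ejzk_root_system S" using S0 unfolding ejzk_root_system_def S_def by auto
  ultimately show ?thesis using dS unfolding ejzk_rank_def by blast
qed

lemma irreducible_subset_irr_component:
  assumes C: "irr_component R C" and S: "S \<subseteq> R" "ejzk_irreducible S" "S \<inter> C \<noteq> {}"
  shows "S \<subseteq> C"
proof (rule ccontr)
  assume "\<not> S \<subseteq> C"
  have "span (S \<inter> C) \<inter> span (S - C) \<subseteq> span C \<inter> span (R - C)"
    using S(1) by (intro Int_mono span_mono) auto
  then have split: "span (S \<inter> C) \<inter> span (S - C) = {0}"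
    using C unfolding irr_component_def by (auto intro: span_zero)
  have "\<exists>A B. A \<noteq> {} \<and> B \<noteq> {} \<and> A \<inter> B = {} \<and> A \<union> B = S \<and> span A \<inter> span B = {0}"
    by (rule exI[of _ "S \<inter> C"], rule exI[of _ "S - C"]) (use S(3) \<open>\<not> S \<subseteq> C\<close> split in blast)
  then show False using S(2) unfolding ejzk_irreducible_def by blast
qed

section \<open>Projections of a root system\<close>

locale projected_roots =
  fixes \<Phi> K :: "'a::euclidean_space set"
  assumes root_system: "root_system \<Phi>" and K_subset: "K \<subseteq> \<Phi>"
begin

abbreviation pr :: "'a \<Rightarrow> 'a" where
  "pr \<equiv> quot_proj K"

definition R :: "'a set" where
  "R = pr ` \<Phi> - {0}"

lemma linear_pr: "linear pr"
  by (rule linear_quot_proj)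

lemma pr_eq_0_iff: "pr v = 0 \<longleftrightarrow> v \<in> span K"
  by (rule quot_proj_eq_0_iff)

lemma finite_R: "finite R"
  unfolding R_def using root_system_finite[OF root_system] by simp

lemma zero_notin_R: "0 \<notin> R"
  unfolding R_def by simp

lemma pr_in_R: "\<gamma> \<in> \<Phi> \<Longrightarrow> pr \<gamma> \<noteq> 0 \<Longrightarrow> pr \<gamma> \<in> R"
  unfolding R_def by simp

lemma R_uminus: "y \<in> R \<Longrightarrow> - y \<in> R"
  unfolding R_def using root_system_uminus[OF root_system] linear_neg[OF linear_pr]
  by (auto simp: image_iff) (metis linear_neg[OF linear_pr])

lemma ejzk_root_system_R: "ejzk_root_system R"
  unfolding ejzk_root_system_def using finite_R zero_notin_R R_uminus by blast

text \<open>Replacing \<open>\<delta>\<close> by \<open>- \<delta>\<close> if necessary, \<open>\<gamma> + \<delta>\<close> is a root; the projections of \<open>\<gamma>\<close>,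
  \<open>\<delta>\<close> and \<open>\<gamma> + \<delta>\<close> then generate the subsystem.\<close>
lemma rank2_subsystem_if_not_orthogonal:
  assumes x: "x \<in> R" and g: "\<gamma> \<in> \<Phi>" "pr \<gamma> \<noteq> 0" "pr \<gamma> \<in> span {x}"
    and d: "\<delta> \<in> \<Phi>" "pr \<delta> \<notin> span {x}" and gd: "\<gamma> \<bullet> \<delta> \<noteq> 0"
  shows "\<exists>S\<subseteq>R. ejzk_root_system S \<and> x \<in> S \<and> ejzk_irreducible S \<and> ejzk_rank S = 2"
proof -
  obtain \<delta>' where d': "\<delta>' \<in> \<Phi>" "pr \<delta>' \<notin> span {x}" "\<gamma> \<bullet> \<delta>' < 0"
  proof (cases "\<gamma> \<bullet> \<delta> < 0")
    case True
    then show ?thesis using that d by blast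
  next
    case False
    then have "\<gamma> \<bullet> (- \<delta>) < 0" using gd by simp
    moreover have "pr (- \<delta>) \<notin> span {x}"
      using d(2) linear_neg[OF linear_pr] span_neg by (metis minus_minus)
    ultimately show ?thesis using that root_system_uminus[OF root_system d(1)] by blast
  qed
  have "\<delta>' \<notin> span {\<gamma>}"
  proof
    assume "\<delta>' \<in> span {\<gamma>}"
    then obtain k where "\<delta>' = k *\<^sub>R \<gamma>" by (auto simp: span_singleton)
    then have "pr \<delta>' = k *\<^sub>R pr \<gamma>" using linear_scale[OF linear_pr] by simp
    then show False using d'(2) g(3) span_scale by metis
  qed
  then have sum: "\<gamma> + \<delta>' \<in> \<Phi>" using root_add_mem[OF root_system g(1) d'(1)] d'(3) by blast
  define S where "S = {x, -x, pr \<gamma>, - pr \<gamma>, pr \<delta>', - pr \<delta>', pr \<gamma> + pr \<delta>', - (pr \<gamma> + pr \<delta>')}"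
  have x0: "x \<noteq> 0" using x zero_notin_R by blast
  have S: "ejzk_root_system S \<and> ejzk_irreducible S \<and> ejzk_rank S = 2"
    unfolding S_def using ejzk_rank2_irreducible_closure[OF x0 g(3,2) d'(2)] .
  then have nz: "pr \<delta>' \<noteq> 0" "pr \<gamma> + pr \<delta>' \<noteq> 0"
    unfolding S_def ejzk_root_system_def by auto
  have add: "pr (\<gamma> + \<delta>') = pr \<gamma> + pr \<delta>'" by (rule linear_add[OF linear_pr])
  have r: "pr \<gamma> \<in> R" "pr \<delta>' \<in> R" "pr \<gamma> + pr \<delta>' \<in> R"
    using pr_in_R[OF g(1,2)] pr_in_R[OF d'(1) nz(1)] pr_in_R[OF sum] nz(2) unfolding add by blast+
  have "S \<subseteq> R"
    unfolding S_def using x r R_uminus[OF x] R_uminus[OF r(1)] R_uminus[OF r(2)] R_uminus[OF r(3)]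
    by blast
  then show ?thesis using S by (intro exI[of _ S]) (simp add: S_def)
qed

definition line_orthogonal :: "'a \<Rightarrow> bool" where
  "line_orthogonal x \<longleftrightarrow>
     (\<forall>\<gamma>\<in>\<Phi>. \<forall>\<delta>\<in>\<Phi>. pr \<gamma> \<noteq> 0 \<and> pr \<gamma> \<in> span {x} \<and> pr \<delta> \<notin> span {x} \<longrightarrow> \<gamma> \<bullet> \<delta> = 0)"

definition line_roots :: "'a \<Rightarrow> 'a set" where
  "line_roots x = {\<gamma>\<in>\<Phi>. pr \<gamma> \<noteq> 0 \<and> pr \<gamma> \<in> span {x}}"

definition line_closure :: "'a \<Rightarrow> 'a set" where
  "line_closure x = line_roots x \<union> {\<kappa>\<in>\<Phi>. pr \<kappa> = 0 \<and> (\<exists>\<gamma>\<in>line_roots x. \<gamma> \<bullet> \<kappa> \<noteq> 0)}"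

lemma line_roots_orthogonal:
  assumes "line_orthogonal x" "\<gamma> \<in> line_roots x" "q \<in> \<Phi> - line_closure x"
  shows "\<gamma> \<bullet> q = 0"
proof (cases "pr q \<in> span {x}")
  case False
  then show ?thesis using assms unfolding line_orthogonal_def line_roots_def by auto
next
  case True
  then have "pr q = 0" using assms(3) unfolding line_closure_def line_roots_def by auto
  then show ?thesis using assms(2,3) unfolding line_closure_def by auto
qed

text \<open>For \<open>p\<close> in the closure with \<open>pr p = 0\<close>, the reflection in \<open>p\<close> of a root \<open>\<gamma>\<close> over the line
  with \<open>\<gamma> \<bullet> p \<noteq> 0\<close> stays over the line; since both are orthogonal to \<open>q\<close>, so is \<open>p\<close>.\<close>
lemma line_closure_orthogonal:
  assumes lo: "line_orthogonal x" and p: "p \<in> line_closure x" and q: "q \<in> \<Phi> - line_closure x"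
  shows "p \<bullet> q = 0"
proof (cases "p \<in> line_roots x")
  case True
  then show ?thesis using line_roots_orthogonal[OF lo _ q] by blast
next
  case False
  then obtain \<gamma> where g: "\<gamma> \<in> line_roots x" "\<gamma> \<bullet> p \<noteq> 0" and p': "p \<in> \<Phi>" "pr p = 0"
    using p unfolding line_closure_def by auto
  have "p \<noteq> 0" using p' root_system_nonzero[OF root_system] by auto
  then have c0: "cartan \<gamma> p \<noteq> 0" using g(2) by (simp add: cartan_def)
  have "pr (root_refl p \<gamma>) = pr \<gamma>"
    using p'(2) linear_diff[OF linear_pr] linear_scale[OF linear_pr] by (simp add: root_refl_def)
  moreover have "root_refl p \<gamma> \<in> \<Phi>"
    using root_system_root_refl[OF root_system p'(1)] g(1) unfolding line_roots_def by auto
  ultimately have "root_refl p \<gamma> \<in> line_roots x" using g(1) unfolding line_roots_def by auto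
  then have "root_refl p \<gamma> \<bullet> q = 0" "\<gamma> \<bullet> q = 0"
    using line_roots_orthogonal[OF lo _ q] g(1) by blast+
  then have "cartan \<gamma> p * (p \<bullet> q) = 0" by (simp add: root_refl_def inner_diff_left)
  then show ?thesis using c0 by simp
qed

lemma not_in_pr_span_complement:
  assumes x: "x \<in> R" and lo: "line_orthogonal x" and m: "m \<in> span (\<Phi> - line_closure x)"
  shows "pr m \<noteq> x"
proof
  assume pm: "pr m = x"
  define P Q where "P = line_closure x" and "Q = \<Phi> - line_closure x"
  define Ker where "Ker = {\<kappa>\<in>\<Phi>. pr \<kappa> = 0}"
  obtain \<gamma> where g: "\<gamma> \<in> \<Phi>" "pr \<gamma> = x" using x unfolding R_def by auto
  have x0: "x \<noteq> 0" using x zero_notin_R by blast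
  have "\<gamma> \<in> P" using g x0 unfolding P_def line_closure_def line_roots_def by (auto intro: span_base)
  have "pr (\<gamma> - m) = 0" using g pm linear_diff[OF linear_pr] by simp
  then have "\<gamma> - m \<in> span Ker"
    using K_subset pr_eq_0_iff span_mono[of K Ker] unfolding Ker_def
    by (auto intro: span_base)
  also have "Ker = (Ker \<inter> P) \<union> (Ker \<inter> Q)" unfolding P_def Q_def Ker_def by auto
  finally obtain a b where ab: "a \<in> span (Ker \<inter> P)" "b \<in> span (Ker \<inter> Q)" "\<gamma> - m = a + b"
    unfolding span_Un by blast
  \<comment> \<open>\<open>\<gamma> - a = m + b\<close> lies in the orthogonal spans of \<open>P\<close> and \<open>Q\<close>, hence vanishes\<close>
  have "\<gamma> - a \<in> span P"
    using \<open>\<gamma> \<in> P\<close> ab(1) span_mono[of "Ker \<inter> P" P] by (metis Int_lower2 span_base span_diff subsetD)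
  moreover have "m + b \<in> span Q"
    using m ab(2) span_mono[of "Ker \<inter> Q" Q] unfolding Q_def by (metis Int_lower2 span_add subsetD)
  moreover have "\<forall>p\<in>P. \<forall>q\<in>Q. orthogonal p q"
    using line_closure_orthogonal[OF lo] unfolding P_def Q_def orthogonal_def by blast
  ultimately have "orthogonal (\<gamma> - a) (m + b)"
    by (metis orthogonal_commute orthogonal_to_span)
  moreover have "\<gamma> - a = m + b" using ab(3) by (simp add: algebra_simps)
  ultimately have "\<gamma> = a" by (simp add: orthogonal_def)
  moreover have "span (Ker \<inter> P) \<subseteq> span K"
    by (rule span_minimal) (auto simp: Ker_def pr_eq_0_iff)
  ultimately have "pr \<gamma> = 0" using ab(1) pr_eq_0_iff by blast
  then show False using g x0 by simp
qed

lemma irr_component_line: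
  assumes x: "x \<in> R" and lo: "line_orthogonal x"
  shows "irr_component R (R \<inter> span {x})"
proof -
  have "R - span {x} \<subseteq> pr ` (\<Phi> - line_closure x)"
    unfolding R_def line_closure_def line_roots_def using span_zero[of "{x}"] by auto
  then have "span (R - span {x}) \<subseteq> pr ` span (\<Phi> - line_closure x)"
    using span_mono span_linear_image[OF linear_pr] by metis
  then have notin: "x \<notin> span (R - span {x})"
    using not_in_pr_span_complement[OF x lo] by blast
  have "span (R \<inter> span {x}) \<inter> span (R - (R \<inter> span {x})) \<subseteq> {0}"
  proof
    fix v assume v: "v \<in> span (R \<inter> span {x}) \<inter> span (R - (R \<inter> span {x}))"
    have "span (R \<inter> span {x}) \<subseteq> span {x}" by (rule span_minimal) auto
    then obtain t where t: "v = t *\<^sub>R x" using v unfolding span_singleton by blast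
    have "R - (R \<inter> span {x}) = R - span {x}" by blast
    then have "(1 / t) *\<^sub>R v \<in> span (R - span {x})" using v span_scale by auto
    then have "t = 0" using notin t by (cases "t = 0") auto
    then show "v \<in> {0}" using t by simp
  qed
  then have "span (R \<inter> span {x}) \<inter> span (R - (R \<inter> span {x})) = {0}"
    by (auto intro: span_zero)
  moreover have "ejzk_irreducible (R \<inter> span {x})"
    using zero_notin_R by (intro ejzk_irreducible_if_subset_line) auto
  ultimately show ?thesis using x unfolding irr_component_def by (auto intro: span_base)
qed

theorem regular_iff_irr_components_rank_ge_2:
  "ejzk_root_system R \<and> ejzk_regular R \<longleftrightarrow> (\<forall>C. irr_component R C \<longrightarrow> ejzk_rank C \<ge> 2)"
proof
  assume "ejzk_root_system R \<and> ejzk_regular R"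
  then have reg: "ejzk_regular R" by blast
  show "\<forall>C. irr_component R C \<longrightarrow> ejzk_rank C \<ge> 2"
  proof (intro allI impI)
    fix C assume C: "irr_component R C"
    then obtain \<alpha> where "\<alpha> \<in> C" "\<alpha> \<in> R" unfolding irr_component_def by blast
    then obtain S where S: "S \<subseteq> R" "\<alpha> \<in> S" "ejzk_irreducible S" "ejzk_rank S = 2"
      using reg unfolding ejzk_regular_def by blast
    then have "S \<subseteq> C" using irreducible_subset_irr_component[OF C] \<open>\<alpha> \<in> C\<close> by blast
    then show "ejzk_rank C \<ge> 2" using S(4) unfolding ejzk_rank_def by (metis dim_subset span_mono)
  qed
next
  assume rank: "\<forall>C. irr_component R C \<longrightarrow> ejzk_rank C \<ge> 2"
  have "\<exists>S\<subseteq>R. ejzk_root_system S \<and> x \<in> S \<and> ejzk_irreducible S \<and> ejzk_rank S = 2"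
    if x: "x \<in> R" for x
  proof (cases "line_orthogonal x")
    case True
    have "dim (span (R \<inter> span {x})) \<le> dim (span {x})"
      by (intro dim_subset span_minimal) auto
    also have "\<dots> \<le> 1" by simp
    finally have "ejzk_rank (R \<inter> span {x}) \<le> 1" unfolding ejzk_rank_def .
    then show ?thesis using rank irr_component_line[OF x True] by fastforce
  next
    case False
    then show ?thesis using rank2_subsystem_if_not_orthogonal[OF x] unfolding line_orthogonal_def by blast
  qed
  then show "ejzk_root_system R \<and> ejzk_regular R"
    using ejzk_root_system_R unfolding ejzk_regular_def by blast
qed

end

section \<open>Adapted simple roots\<close>

lemma int_span_subset_span: "int_span S \<subseteq> span S"
proof
  fix x assume "x \<in> int_span S"
  then obtain F c where F: "finite F" "F \<subseteq> S" "x = int_comb F c" unfolding int_span_def by auto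
  have "int_comb F c \<in> span F" unfolding int_comb_def by (intro span_sum span_scale span_base)
  then show "x \<in> span S" using F span_mono by blast
qed

lemma base_in_int_span: "d \<in> S \<Longrightarrow> d \<in> int_span S"
  unfolding int_span_def int_comb_def by (intro CollectI exI[of _ "{d}"] exI[of _ "\<lambda>_. 1"]) auto

lemma int_span_uminus:
  assumes "x \<in> int_span S"
  shows "- x \<in> int_span S"
proof -
  obtain F c where "finite F" "F \<subseteq> S" "x = int_comb F c" using assms unfolding int_span_def by auto
  then show ?thesis unfolding int_span_def by (auto simp flip: int_comb_uminus)
qed

lemma int_comb_mono_neutral:
  assumes "finite D" "E \<subseteq> D" "\<forall>d\<in>D - E. c d = 0"
  shows "int_comb D c = int_comb E c"
  unfolding int_comb_def by (rule sum.mono_neutral_right) (use assms in auto)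

lemma int_comb_in_int_span_if_in_span:
  fixes D :: "'a::euclidean_space set"
  assumes D: "independent D" and E: "E \<subseteq> D" and "v = int_comb D c" "v \<in> span E"
  shows "v \<in> int_span E"
proof -
  have finD: "finite D" using D independent_imp_finite by blast
  then have "finite E" using E finite_subset by blast
  then obtain a where a: "v = (\<Sum>u\<in>E. a u *\<^sub>R u)" using assms(4) by (auto simp: span_finite)
  define a' where "a' u = (if u \<in> E then a u else 0)" for u
  have "(\<Sum>u\<in>E. a u *\<^sub>R u) = (\<Sum>u\<in>D. a' u *\<^sub>R u)"
    unfolding a'_def by (rule sum.mono_neutral_cong_left) (use finD E in auto)
  then have "(\<Sum>u\<in>D. (of_int (c u) - a' u) *\<^sub>R u) = 0"
    using a assms(3) unfolding int_comb_def by (simp add: scaleR_diff_left sum_subtractf)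
  then have "\<forall>u\<in>D. of_int (c u) - a' u = 0"
    using D unfolding independent_explicit by (auto dest: spec[where x = "\<lambda>u. of_int (c u) - a' u"])
  then have "\<forall>u\<in>D - E. c u = 0" unfolding a'_def by auto
  then have "v = int_comb E c" using assms(3) int_comb_mono_neutral[OF finD E] by simp
  then show ?thesis unfolding int_span_def using \<open>finite E\<close> by blast
qed

lemma simple_roots_int_comb:
  "simple_roots \<Phi> D \<Longrightarrow> \<alpha> \<in> \<Phi> \<Longrightarrow>
     \<exists>c. \<alpha> = int_comb D c \<and> ((\<forall>d\<in>D. c d \<ge> 0) \<or> (\<forall>d\<in>D. c d \<le> 0))"
  unfolding simple_roots_def by blast

locale parabolic_quotient =
  fixes \<Phi> D J :: "'a::euclidean_space set"
  assumes root_system: "root_system \<Phi>" and simple_roots: "simple_roots \<Phi> D"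
begin

lemma D_subset: "D \<subseteq> \<Phi>"
  using simple_roots unfolding simple_roots_def by blast

lemma independent_D: "independent D"
  using simple_roots unfolding simple_roots_def by blast

sublocale projected_roots \<Phi> "D - J"
  using root_system D_subset by unfold_locales auto

lemma PhiJ_eq: "PhiJ \<Phi> D J = R"
  unfolding PhiJ_def piJ_def R_def by simp

lemma piJ_eq: "piJ D J = pr"
  unfolding piJ_def by simp

lemma int_span_inter_roots: "int_span (D - J) \<inter> \<Phi> = \<Phi> \<inter> span (D - J)"
proof -
  have "\<gamma> \<in> int_span (D - J)" if g: "\<gamma> \<in> \<Phi>" "\<gamma> \<in> span (D - J)" for \<gamma>
  proof -
    obtain c where "\<gamma> = int_comb D c" using simple_roots_int_comb[OF simple_roots g(1)] by blast
    then show ?thesis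
      by (rule int_comb_in_int_span_if_in_span[OF independent_D Diff_subset _ g(2)])
  qed
  then show ?thesis using int_span_subset_span[of "D - J"] by auto
qed

end

locale refined_functional = parabolic_quotient \<Phi> D J + generic_functional \<Phi> h
  for \<Phi> D J :: "'a::euclidean_space set" and h :: "'a \<Rightarrow> real" +
  fixes f :: "'a \<Rightarrow> real"
  assumes f_Ffun: "f \<in> Ffun R"
    and h_pos_if: "\<And>\<gamma>. \<gamma> \<in> \<Phi> \<Longrightarrow> f (pr \<gamma>) > 0 \<Longrightarrow> h \<gamma> > 0"
    and h_neg_if: "\<And>\<gamma>. \<gamma> \<in> \<Phi> \<Longrightarrow> f (pr \<gamma>) < 0 \<Longrightarrow> h \<gamma> < 0"
begin

definition J' :: "'a set" where
  "J' = {d\<in>Base. d \<notin> span (D - J)}"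

lemma linear_f: "linear f"
  using Ffun_linear[OF f_Ffun] .

lemma f_pr_pos_iff:
  assumes "\<gamma> \<in> \<Phi>" "pr \<gamma> \<noteq> 0"
  shows "f (pr \<gamma>) > 0 \<longleftrightarrow> h \<gamma> > 0"
proof -
  have "f (pr \<gamma>) \<noteq> 0" using Ffun_nonzero[OF f_Ffun pr_in_R[OF assms]] .
  then show ?thesis using h_pos_if[OF assms(1)] h_neg_if[OF assms(1)] by fastforce
qed

lemma Base_minus_J': "Base - J' = {d\<in>Base. d \<in> span (D - J)}"
  unfolding J'_def by auto

text \<open>A positive root in the kernel of \<open>pr\<close> only involves simple roots in the kernel, because
  \<open>f \<circ> pr\<close> is nonnegative on \<open>Base\<close> and positive on \<open>J'\<close>.\<close>
lemma Pos_in_kernel_int_span: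
  assumes r: "\<rho> \<in> Pos" "\<rho> \<in> span (D - J)"
  shows "\<rho> \<in> int_span (Base - J')"
proof -
  obtain c where c: "\<rho> = int_comb Base c" "\<forall>d\<in>Base. c d \<ge> 0"
    using Pos_nonneg_int_comb r(1) by blast
  have lfpr: "linear (f \<circ> pr)" using linear_compose[OF linear_pr linear_f] .
  have "(\<Sum>d\<in>Base. of_int (c d) * f (pr d)) = f (pr \<rho>)"
    using c(1) linear_int_comb[OF lfpr, of Base c] by simp
  also have "\<dots> = 0" using r(2) pr_eq_0_iff[of \<rho>] linear_0[OF linear_f] by simp
  finally have s0: "(\<Sum>d\<in>Base. of_int (c d) * f (pr d)) = 0" .
  have fpos: "f (pr d) > 0" if "d \<in> J'" for d
    using that f_pr_pos_iff[of d] Base_subset_Pos pr_eq_0_iff unfolding J'_def Pos_def by auto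
  have nn: "of_int (c d) * f (pr d) \<ge> 0" if d: "d \<in> Base" for d
  proof (cases "d \<in> J'")
    case True
    then show ?thesis using fpos[OF True] c(2) d by simp
  next
    case False
    then have "pr d = 0" using d pr_eq_0_iff[of d] unfolding J'_def by auto
    then show ?thesis using linear_0[OF linear_f] by simp
  qed
  have "\<forall>d\<in>Base. of_int (c d) * f (pr d) = 0"
    using sum_nonneg_eq_0_iff[OF finite_Base, of "\<lambda>d. of_int (c d) * f (pr d)"] nn s0 by simp
  then have "\<forall>d\<in>Base - (Base - J'). c d = 0" using fpos by force
  then have "\<rho> = int_comb (Base - J') c"
    using c(1) int_comb_mono_neutral[OF finite_Base Diff_subset] by simp
  then show ?thesis unfolding int_span_def using finite_Base by blast
qed

lemma int_span_Base_minus_J': "int_span (Base - J') \<inter> \<Phi> = \<Phi> \<inter> span (D - J)"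
proof (intro equalityI subsetI)
  have "span (Base - J') \<subseteq> span (D - J)" unfolding Base_minus_J' by (rule span_minimal) auto
  then show "\<gamma> \<in> \<Phi> \<inter> span (D - J)" if "\<gamma> \<in> int_span (Base - J') \<inter> \<Phi>" for \<gamma>
    using that int_span_subset_span by blast
next
  fix \<gamma> assume g: "\<gamma> \<in> \<Phi> \<inter> span (D - J)"
  then have "h \<gamma> \<noteq> 0" using h_nonzero by blast
  then have "\<gamma> \<in> Pos \<or> - \<gamma> \<in> Pos"
    using g linear_neg[OF linear_h] root_system_uminus[OF root_system] unfolding Pos_def
    by (auto simp: neq_iff)
  moreover have "- \<gamma> \<in> span (D - J)" using g span_neg by blast
  ultimately show "\<gamma> \<in> int_span (Base - J') \<inter> \<Phi>"
    using g Pos_in_kernel_int_span int_span_uminus[of "- \<gamma>"] by auto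
qed

lemma span_Base_minus_J': "span (Base - J') = span (D - J)"
proof
  show "span (Base - J') \<subseteq> span (D - J)" unfolding Base_minus_J' by (rule span_minimal) auto
next
  have "D - J \<subseteq> int_span (Base - J')" using int_span_Base_minus_J' D_subset by (auto intro: span_base)
  then show "span (D - J) \<subseteq> span (Base - J')"
    using int_span_subset_span by (intro span_minimal) auto
qed

lemma pos_part_eq: "pos_part R f = pr ` pos_roots \<Phi> Base - {0}"
  unfolding pos_roots_Base pos_part_def R_def Pos_def using f_pr_pos_iff by auto

lemma adapted_simple_roots:
  "simple_roots \<Phi> Base \<and> J' \<subseteq> Base \<and>
     int_span (Base - J') \<inter> \<Phi> = int_span (D - J) \<inter> \<Phi> \<and>
     pos_part R f = pr ` pos_roots \<Phi> Base - {0} \<and>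
     pr ` pos_roots \<Phi> Base - {0} = piJ Base J' ` pos_roots \<Phi> Base - {0}"
  using simple_roots_Base int_span_Base_minus_J' int_span_inter_roots pos_part_eq
    quot_proj_cong[OF span_Base_minus_J']
  unfolding J'_def piJ_def by auto

end

lemma (in parabolic_quotient) exists_adapted_simple_roots:
  assumes f: "f \<in> Ffun R"
  shows "\<exists>D' J'. simple_roots \<Phi> D' \<and> J' \<subseteq> D' \<and>
           int_span (D' - J') \<inter> \<Phi> = int_span (D - J) \<inter> \<Phi> \<and>
           pos_part R f = pr ` pos_roots \<Phi> D' - {0} \<and>
           pr ` pos_roots \<Phi> D' - {0} = piJ D' J' ` pos_roots \<Phi> D' - {0}"
proof -
  have "linear (f \<circ> pr)" using linear_compose[OF linear_pr Ffun_linear[OF f]] .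
  from exists_generic_perturbation[OF root_system_finite[OF root_system]
      root_system_nonzero[OF root_system] this]
  obtain h :: "'a \<Rightarrow> real" where h: "linear h" "\<forall>u\<in>\<Phi>. h u \<noteq> 0"
    "\<forall>u\<in>\<Phi>. f (pr u) > 0 \<longrightarrow> h u > 0" "\<forall>u\<in>\<Phi>. f (pr u) < 0 \<longrightarrow> h u < 0"
    by auto
  have G: "generic_functional \<Phi> h"
    by (rule generic_functional.intro[OF root_system h(1)]) (use h(2) in blast)
  interpret refined_functional \<Phi> D J h f
    by (rule refined_functional.intro[OF parabolic_quotient_axioms G refined_functional_axioms.intro])
      (use h f in auto)
  show ?thesis by (intro exI[of _ Base] exI[of _ J'] adapted_simple_roots)
qed

section \<open>The complement of the core\<close>

lemma sum_indicator_scaleR: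
  fixes v :: "'b \<Rightarrow> 'c::real_vector"
  assumes "finite B" "b \<in> B"
  shows "(\<Sum>x\<in>B. (if x = b then t else 0) *\<^sub>R v x) = t *\<^sub>R v b"
proof -
  have "(\<Sum>x\<in>B. (if x = b then t else 0) *\<^sub>R v x) = (\<Sum>x\<in>B. if x = b then t *\<^sub>R v x else 0)"
    by (rule sum.cong) auto
  also have "\<dots> = t *\<^sub>R v b" using assms by simp
  finally show ?thesis .
qed

locale adapted_base = parabolic_quotient \<Phi> D J
  for \<Phi> D J :: "'a::euclidean_space set" +
  fixes f :: "'a \<Rightarrow> real" and D' J' :: "'a set"
  assumes f_Ffun: "f \<in> Ffun R" and simple_roots': "simple_roots \<Phi> D'" and J'_subset: "J' \<subseteq> D'"
    and same_kernel_roots: "int_span (D' - J') \<inter> \<Phi> = int_span (D - J) \<inter> \<Phi>"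
    and pos_part_eq: "pos_part R f = pr ` pos_roots \<Phi> D' - {0}"
begin

lemma linear_f: "linear f"
  using Ffun_linear[OF f_Ffun] .

lemma D'_subset: "D' \<subseteq> \<Phi>"
  using simple_roots' unfolding simple_roots_def by blast

lemma independent_D': "independent D'"
  using simple_roots' unfolding simple_roots_def by blast

lemma finite_D': "finite D'"
  using independent_D' independent_imp_finite by blast

lemma finite_J': "finite J'"
  using finite_D' J'_subset finite_subset by blast

lemma pr_D'_minus_J': "d \<in> D' - J' \<Longrightarrow> pr d = 0"
  using D'_subset base_in_int_span same_kernel_roots int_span_inter_roots pr_eq_0_iff by blast

lemma span_kernel_subset: "span (D - J) \<subseteq> span (D' - J')"
proof (rule span_minimal)
  show "D - J \<subseteq> span (D' - J')"
    using D_subset base_in_int_span same_kernel_roots int_span_subset_span by blast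
qed auto

lemma pr_sum_scaleR: "pr (\<Sum>b\<in>B. a b *\<^sub>R b) = (\<Sum>b\<in>B. a b *\<^sub>R pr b)"
  by (simp add: linear_sum[OF linear_pr] linear_scale[OF linear_pr])

text \<open>The projections of \<open>J'\<close> are linearly independent: a relation among them lifts to a
  relation between \<open>J'\<close> and \<open>D' - J'\<close>, which spans the kernel.\<close>
lemma pr_J'_combination_eq_0:
  assumes "(\<Sum>b\<in>J'. a b *\<^sub>R pr b) = 0" "b \<in> J'"
  shows "a b = 0"
proof -
  have "pr (\<Sum>b\<in>J'. a b *\<^sub>R b) = 0" unfolding pr_sum_scaleR using assms(1) .
  then have "(\<Sum>b\<in>J'. a b *\<^sub>R b) \<in> span (D' - J')" using pr_eq_0_iff span_kernel_subset by blast
  then obtain e where e: "(\<Sum>b\<in>J'. a b *\<^sub>R b) = (\<Sum>b\<in>D' - J'. e b *\<^sub>R b)"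
    using finite_D' by (auto simp: span_finite)
  define u where "u b = (if b \<in> J' then a b else - e b)" for b
  have "(\<Sum>b\<in>D'. u b *\<^sub>R b) = (\<Sum>b\<in>J'. u b *\<^sub>R b) + (\<Sum>b\<in>D' - J'. u b *\<^sub>R b)"
    using sum.subset_diff[OF J'_subset finite_D', of "\<lambda>b. u b *\<^sub>R b"] by (simp add: add.commute)
  also have "\<dots> = 0" using e unfolding u_def by (simp add: sum_negf)
  finally have "\<forall>b\<in>D'. u b = 0"
    using independent_D' unfolding independent_explicit by blast
  then have "u b = 0" using assms(2) J'_subset by blast
  then show ?thesis using assms(2) unfolding u_def by simp
qed

lemma pr_J'_combination_unique:
  assumes "(\<Sum>b\<in>J'. a b *\<^sub>R pr b) = (\<Sum>b\<in>J'. a' b *\<^sub>R pr b)" "b \<in> J'"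
  shows "a b = a' b"
proof -
  have "(\<Sum>b\<in>J'. (a b - a' b) *\<^sub>R pr b) = 0"
    using assms(1) by (simp add: scaleR_diff_left sum_subtractf)
  from pr_J'_combination_eq_0[OF this assms(2)] show ?thesis by simp
qed

lemma pr_J'_nonzero: "b \<in> J' \<Longrightarrow> pr b \<noteq> 0"
  using pr_J'_combination_eq_0[of "\<lambda>x. if x = b then 1 else 0" b]
    sum_indicator_scaleR[OF finite_J', of b 1 pr] by auto

lemma pr_J'_pos_part: "b \<in> J' \<Longrightarrow> pr b \<in> pos_part R f"
proof -
  assume b: "b \<in> J'"
  then have "b \<in> D'" "b \<in> \<Phi>" using J'_subset D'_subset by auto
  then have "b \<in> pos_roots \<Phi> D'" unfolding pos_roots_def
    using int_comb_indicator[OF finite_D', of b, symmetric]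
    by (intro CollectI conjI exI[of _ "\<lambda>d. if d = b then 1 else 0"]) auto
  then show ?thesis using pos_part_eq pr_J'_nonzero[OF b] by auto
qed

lemma pos_part_nonneg_int_comb:
  assumes "y \<in> pos_part R f"
  obtains c where "y = (\<Sum>b\<in>J'. of_int (c b) *\<^sub>R pr b)" "\<forall>b\<in>J'. c b \<ge> 0"
proof -
  obtain \<gamma> where g: "\<gamma> \<in> pos_roots \<Phi> D'" "y = pr \<gamma>" using assms pos_part_eq by auto
  then obtain c where c: "\<gamma> = int_comb D' c" "\<forall>d\<in>D'. c d \<ge> 0" unfolding pos_roots_def by auto
  have "y = (\<Sum>b\<in>D'. of_int (c b) *\<^sub>R pr b)" using g c by (simp add: int_comb_def pr_sum_scaleR)
  also have "\<dots> = (\<Sum>b\<in>J'. of_int (c b) *\<^sub>R pr b)"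
    by (rule sum.mono_neutral_right[OF finite_D' J'_subset]) (use pr_D'_minus_J' in auto)
  finally show ?thesis using that c(2) J'_subset by blast
qed

lemma pos_part_in_line_nat_mults:
  assumes x: "x \<in> pos_part R f" and b: "\<beta> \<in> J'" "pr \<beta> \<in> span {x}"
  shows "x \<in> nat_mults (pr \<beta>)"
proof -
  obtain c where c: "x = (\<Sum>b\<in>J'. of_int (c b) *\<^sub>R pr b)" "\<forall>b\<in>J'. c b \<ge> 0"
    using pos_part_nonneg_int_comb[OF x] by blast
  obtain s where s: "pr \<beta> = s *\<^sub>R x" using b(2) by (auto simp: span_singleton)
  then have "s \<noteq> 0" using pr_J'_nonzero[OF b(1)] by auto
  then have "x = (1 / s) *\<^sub>R pr \<beta>" using s by simp
  also have "\<dots> = (\<Sum>b\<in>J'. (if b = \<beta> then 1 / s else 0) *\<^sub>R pr b)"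
    by (rule sum_indicator_scaleR[OF finite_J' b(1), of "1 / s" pr, symmetric])
  finally have "of_int (c b) = (if b = \<beta> then 1 / s else 0)" if "b \<in> J'" for b
    using pr_J'_combination_unique[OF _ that, of "\<lambda>b. of_int (c b)"] c(1) by simp
  then have "x = (\<Sum>b\<in>J'. (if b = \<beta> then of_int (c \<beta>) else 0) *\<^sub>R pr b)"
    unfolding c(1) by (intro sum.cong) auto
  also have "\<dots> = of_int (c \<beta>) *\<^sub>R pr \<beta>" by (rule sum_indicator_scaleR[OF finite_J' b(1), of "of_int (c \<beta>)" pr])
  finally have "x = of_int (c \<beta>) *\<^sub>R pr \<beta>" .
  moreover have "x \<noteq> 0" using x unfolding pos_part_def R_def by auto
  ultimately have "x = of_nat (nat (c \<beta>)) *\<^sub>R pr \<beta>" "nat (c \<beta>) \<ge> 1"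
    using c(2) b(1) by (auto simp: le_less)
  then show ?thesis unfolding nat_mults_def by blast
qed

text \<open>If \<open>x\<close> is not in the core, some \<open>g\<close> cuts \<open>pos_part R f\<close> down to the line of \<open>x\<close>; \<open>g x > 0\<close>,
  so \<open>g\<close> is positive on some \<open>pr \<beta>\<close> occurring in \<open>x\<close>, which then lies on that line.\<close>
lemma pos_part_minus_core_subset: "pos_part R f - core R f \<subseteq> R \<inter> (\<Union>\<alpha>\<in>pr ` J'. nat_mults \<alpha>)"
proof
  fix x assume x: "x \<in> pos_part R f - core R f"
  then have xp: "x \<in> pos_part R f" and xR: "x \<in> R" and fx: "f x > 0" unfolding pos_part_def by auto
  obtain g where g: "g \<in> Ffun R" and sp: "span {x} = span (pos_part R f \<inter> pos_part R g)"
    using x xp unfolding core_def by blast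
  have lg: "linear g" using Ffun_linear[OF g] .
  have line: "y \<in> span {x}" if "y \<in> pos_part R f \<inter> pos_part R g" for y
    unfolding sp by (rule span_base[OF that])
  have "pos_part R f \<inter> pos_part R g \<noteq> {}"
    using sp xR zero_notin_R span_base[of x "{x}"] by auto
  then obtain z where z: "z \<in> pos_part R f" "z \<in> pos_part R g" by blast
  then obtain t where t: "z = t *\<^sub>R x" using line by (auto simp: span_singleton)
  have "0 < f z" "0 < g z" using z unfolding pos_part_def by auto
  then have "t > 0" "g x > 0"
    using t fx linear_scale[OF linear_f] linear_scale[OF lg] by (auto simp: zero_less_mult_iff)
  obtain c where c: "x = (\<Sum>b\<in>J'. of_int (c b) *\<^sub>R pr b)" "\<forall>b\<in>J'. c b \<ge> 0"
    using pos_part_nonneg_int_comb[OF xp] by blast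
  then have "g x = (\<Sum>b\<in>J'. of_int (c b) * g (pr b))"
    by (simp add: linear_sum[OF lg] linear_scale[OF lg])
  then obtain \<beta> where b: "\<beta> \<in> J'" "of_int (c \<beta>) * g (pr \<beta>) > 0"
    using \<open>g x > 0\<close> by (metis (no_types, lifting) not_le sum_nonpos)
  then have "g (pr \<beta>) > 0" using c(2) by (auto simp: zero_less_mult_iff)
  then have "pr \<beta> \<in> span {x}"
    using line pr_J'_pos_part[OF b(1)] unfolding pos_part_def by auto
  then show "x \<in> R \<inter> (\<Union>\<alpha>\<in>pr ` J'. nat_mults \<alpha>)"
    using pos_part_in_line_nat_mults[OF xp b(1)] xR b(1) by blast
qed

lemma exists_coordinate_functional:
  "\<exists>\<theta>. linear \<theta> \<and> (\<forall>v. \<theta> (pr v) = \<theta> v) \<and> (\<forall>b\<in>J'. \<theta> b = (if b = \<alpha> then 0 else (1::real)))"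
proof -
  have "\<exists>\<theta>::'a \<Rightarrow> real. linear \<theta> \<and> (\<forall>d\<in>D'. \<theta> d = (\<lambda>d. if d \<in> J' \<and> d \<noteq> \<alpha> then 1 else 0) d)"
    by (rule linear_independent_extend[OF independent_D'])
  then obtain \<theta> :: "'a \<Rightarrow> real"
    where l: "linear \<theta>" "\<forall>d\<in>D'. \<theta> d = (if d \<in> J' \<and> d \<noteq> \<alpha> then 1 else 0)"
    by auto
  have "\<theta> (pr v) = \<theta> v" for v
  proof -
    have "v - pr v \<in> span (D' - J')" using quot_proj_char[of v "D - J"] span_kernel_subset by blast
    moreover have "\<forall>d\<in>D' - J'. \<theta> d = 0" using l(2) by auto
    ultimately have "\<theta> (v - pr v) = 0" using linear_eq_0_on_span[OF l(1)] by blast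
    then show ?thesis using linear_diff[OF l(1)] by simp
  qed
  moreover have "\<forall>b\<in>J'. \<theta> b = (if b = \<alpha> then 0 else 1)" using l(2) J'_subset by auto
  ultimately show ?thesis using l(1) by (intro exI[of _ \<theta>]) simp
qed

context
  fixes \<alpha> :: 'a and \<theta> :: "'a \<Rightarrow> real"
  assumes \<alpha>: "\<alpha> \<in> J'" and linear_\<theta>: "linear \<theta>" and \<theta>_pr: "\<And>v. \<theta> (pr v) = \<theta> v"
    and \<theta>_J': "\<And>b. b \<in> J' \<Longrightarrow> \<theta> b = (if b = \<alpha> then 0 else 1)"
begin

lemma coordinate_on_pos_part:
  assumes "y \<in> pos_part R f"
  shows "\<theta> y = 0 \<and> y \<in> span {pr \<alpha>} \<or> \<theta> y \<ge> 1"
proof -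
  obtain c where c: "y = (\<Sum>b\<in>J'. of_int (c b) *\<^sub>R pr b)" "\<forall>b\<in>J'. c b \<ge> 0"
    using pos_part_nonneg_int_comb[OF assms] by blast
  define n where "n = (\<Sum>b\<in>J' - {\<alpha>}. c b)"
  have "\<theta> y = (\<Sum>b\<in>J'. of_int (c b) * \<theta> (pr b))"
    using c(1) by (simp add: linear_sum[OF linear_\<theta>] linear_scale[OF linear_\<theta>])
  also have "\<dots> = (\<Sum>b\<in>J' - {\<alpha>}. of_int (c b))"
    using finite_J' \<alpha> by (simp add: \<theta>_pr \<theta>_J' sum.remove if_distrib cong: if_cong)
  finally have \<theta>y: "\<theta> y = of_int n" unfolding n_def by simp
  show ?thesis
  proof (cases "n = 0")
    case True
    then have "\<forall>b\<in>J' - {\<alpha>}. c b = 0"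
      using sum_nonneg_eq_0_iff[of "J' - {\<alpha>}" c] finite_J' c(2) unfolding n_def by auto
    then have "y = (\<Sum>b\<in>J'. (if b = \<alpha> then of_int (c \<alpha>) else 0) *\<^sub>R pr b)"
      unfolding c(1) by (intro sum.cong) auto
    also have "\<dots> = of_int (c \<alpha>) *\<^sub>R pr \<alpha>"
      by (rule sum_indicator_scaleR[OF finite_J' \<alpha>, of "of_int (c \<alpha>)" pr])
    finally have "y \<in> span {pr \<alpha>}" by (simp add: span_base span_scale)
    then show ?thesis using \<theta>y True by simp
  next
    case False
    moreover have "n \<ge> 0" unfolding n_def using c(2) by (intro sum_nonneg) auto
    ultimately show ?thesis using \<theta>y by simp
  qed
qed

text \<open>Subtract a large multiple of \<open>\<theta>\<close> from \<open>f\<close> and perturb the result into \<open>F(R)\<close>.\<close>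
lemma exists_Ffun_cut_to_kernel:
  "\<exists>g\<in>Ffun R. pos_part R f \<inter> pos_part R g = {y\<in>pos_part R f. \<theta> y = 0}"
proof -
  define M where "M = (\<Sum>y\<in>pos_part R f. \<bar>f y\<bar>) + 1"
  have fM: "f y < M" if "y \<in> pos_part R f" for y
  proof -
    have "finite (pos_part R f)" unfolding pos_part_def using finite_R by simp
    then have "\<bar>f y\<bar> \<le> (\<Sum>y\<in>pos_part R f. \<bar>f y\<bar>)"
      using member_le_sum[OF that, of "\<lambda>y. \<bar>f y\<bar>"] by simp
    then show ?thesis unfolding M_def by linarith
  qed
  have "M > 0" unfolding M_def by (simp add: sum_nonneg add_nonneg_pos)
  define g0 where "g0 v = f v - M * \<theta> v" for v
  have "linear g0" unfolding g0_def using linear_add_scaled[OF linear_f linear_\<theta>, of "- M"] by simp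
  then obtain g where g: "g \<in> Ffun R" "\<forall>y\<in>R. g0 y > 0 \<longrightarrow> g y > 0" "\<forall>y\<in>R. g0 y < 0 \<longrightarrow> g y < 0"
    using exists_Ffun_perturbation[OF finite_R zero_notin_R] by blast
  have "pos_part R f \<inter> pos_part R g = {y\<in>pos_part R f. \<theta> y = 0}"
  proof (intro equalityI subsetI)
    fix y assume y: "y \<in> pos_part R f \<inter> pos_part R g"
    then have yf: "y \<in> pos_part R f" and yR: "y \<in> R" and "g y > 0" unfolding pos_part_def by auto
    have "\<theta> y = 0"
    proof (rule ccontr)
      assume "\<theta> y \<noteq> 0"
      then have "\<theta> y \<ge> 1" using coordinate_on_pos_part[OF yf] by auto
      then have "M \<le> M * \<theta> y" using \<open>M > 0\<close> by simp
      then have "g0 y < 0" using fM[OF yf] unfolding g0_def by simp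
      then show False using g(3) yR \<open>g y > 0\<close> by auto
    qed
    then show "y \<in> {y\<in>pos_part R f. \<theta> y = 0}" using yf by simp
  next
    fix y assume "y \<in> {y\<in>pos_part R f. \<theta> y = 0}"
    then show "y \<in> pos_part R f \<inter> pos_part R g"
      using g(2) unfolding g0_def pos_part_def by auto
  qed
  then show ?thesis using g(1) by blast
qed

lemma line_not_in_core:
  assumes x: "x \<in> pos_part R f" "x \<in> span {pr \<alpha>}"
  shows "x \<notin> core R f"
proof -
  obtain g where g: "g \<in> Ffun R" and T: "pos_part R f \<inter> pos_part R g = {y\<in>pos_part R f. \<theta> y = 0}"
    using exists_Ffun_cut_to_kernel by blast
  have "x \<noteq> 0" using x(1) zero_notin_R unfolding pos_part_def by auto
  moreover obtain t where t: "x = t *\<^sub>R pr \<alpha>" using x(2) by (auto simp: span_singleton)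
  ultimately have "pr \<alpha> = (1 / t) *\<^sub>R x" by auto
  then have line: "span {pr \<alpha>} \<subseteq> span {x}" by (intro span_minimal) (auto intro: span_base span_scale)
  have "{y\<in>pos_part R f. \<theta> y = 0} \<subseteq> span {pr \<alpha>}" using coordinate_on_pos_part by force
  then have "span (pos_part R f \<inter> pos_part R g) \<subseteq> span {x}"
    unfolding T by (intro span_minimal subspace_span) (use line in blast)
  moreover have "\<theta> x = 0"
    using x(2) \<theta>_pr \<theta>_J'[OF \<alpha>] linear_scale[OF linear_\<theta>] by (auto simp: span_singleton)
  then have "span {x} \<subseteq> span (pos_part R f \<inter> pos_part R g)"
    using x(1) unfolding T by (intro span_mono) auto
  ultimately show ?thesis using g unfolding core_def by auto
qed

end

lemma subset_pos_part_minus_core: "R \<inter> (\<Union>\<alpha>\<in>pr ` J'. nat_mults \<alpha>) \<subseteq> pos_part R f - core R f"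
proof
  fix x assume "x \<in> R \<inter> (\<Union>\<alpha>\<in>pr ` J'. nat_mults \<alpha>)"
  then obtain \<alpha> k where xR: "x \<in> R" and \<alpha>: "\<alpha> \<in> J'" and k: "k \<ge> 1" "x = of_nat k *\<^sub>R pr \<alpha>"
    unfolding nat_mults_def by blast
  have "f x = of_nat k * f (pr \<alpha>)" using k linear_scale[OF linear_f] by simp
  moreover have "f (pr \<alpha>) > 0" using pr_J'_pos_part[OF \<alpha>] unfolding pos_part_def by auto
  ultimately have xp: "x \<in> pos_part R f" using xR k unfolding pos_part_def by simp
  obtain \<theta> :: "'a \<Rightarrow> real"
    where "linear \<theta>" "\<forall>v. \<theta> (pr v) = \<theta> v" "\<forall>b\<in>J'. \<theta> b = (if b = \<alpha> then 0 else 1)"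
    using exists_coordinate_functional[of \<alpha>] by blast
  moreover have "x \<in> span {pr \<alpha>}" using k by (auto simp: span_singleton)
  ultimately have "x \<notin> core R f" using line_not_in_core[OF \<alpha>] xp by blast
  then show "x \<in> pos_part R f - core R f" using xp by blast
qed

lemma pos_part_minus_core_eq: "pos_part R f - core R f = R \<inter> (\<Union>\<alpha>\<in>pr ` J'. nat_mults \<alpha>)"
  using pos_part_minus_core_subset subset_pos_part_minus_core by blast

end

lemma (in parabolic_quotient) pos_part_minus_core_eq_if_adapted:
  assumes "f \<in> Ffun R" "simple_roots \<Phi> D'" "J' \<subseteq> D'"
    "int_span (D' - J') \<inter> \<Phi> = int_span (D - J) \<inter> \<Phi>" "pos_part R f = pr ` pos_roots \<Phi> D' - {0}"
  shows "pos_part R f - core R f = R \<inter> (\<Union>\<alpha>\<in>pr ` J'. nat_mults \<alpha>)"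
proof -
  interpret adapted_base \<Phi> D J f D' J'
    by (rule adapted_base.intro[OF parabolic_quotient_axioms adapted_base_axioms.intro]) (fact assms)+
  show ?thesis by (rule pos_part_minus_core_eq)
qed

theorem lemma4p2:
  fixes \<Phi> D J :: "'a::euclidean_space set"
  assumes "root_system \<Phi>" and "simple_roots \<Phi> D" and "J \<subseteq> D"
  shows "(ejzk_root_system (PhiJ \<Phi> D J) \<and> ejzk_regular (PhiJ \<Phi> D J) \<longleftrightarrow>
           (\<forall>C. irr_component (PhiJ \<Phi> D J) C \<longrightarrow> ejzk_rank C \<ge> 2))
       \<and> (\<forall>f\<in>Ffun (PhiJ \<Phi> D J). \<exists>D' J'. simple_roots \<Phi> D' \<and> J' \<subseteq> D' \<and>
            int_span (D' - J') \<inter> \<Phi> = int_span (D - J) \<inter> \<Phi> \<and>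
            pos_part (PhiJ \<Phi> D J) f = piJ D J ` pos_roots \<Phi> D' - {0} \<and>
            piJ D J ` pos_roots \<Phi> D' - {0} = piJ D' J' ` pos_roots \<Phi> D' - {0})
       \<and> (\<forall>f\<in>Ffun (PhiJ \<Phi> D J). \<forall>D' J'. simple_roots \<Phi> D' \<and> J' \<subseteq> D' \<and>
            int_span (D' - J') \<inter> \<Phi> = int_span (D - J) \<inter> \<Phi> \<and>
            pos_part (PhiJ \<Phi> D J) f = piJ D J ` pos_roots \<Phi> D' - {0} \<and>
            piJ D J ` pos_roots \<Phi> D' - {0} = piJ D' J' ` pos_roots \<Phi> D' - {0} \<longrightarrow>
            pos_part (PhiJ \<Phi> D J) f - core (PhiJ \<Phi> D J) f =
              PhiJ \<Phi> D J \<inter> (\<Union>\<alpha>\<in>piJ D J ` J'. nat_mults \<alpha>))"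
proof -
  \<comment> \<open>only \<open>D - J\<close> enters\<close>
  interpret parabolic_quotient \<Phi> D J using assms(1,2) by (rule parabolic_quotient.intro)
  show ?thesis
    unfolding PhiJ_eq piJ_eq
    by (intro conjI ballI allI impI regular_iff_irr_components_rank_ge_2 exists_adapted_simple_roots)
      (assumption | elim conjE, rule pos_part_minus_core_eq_if_adapted)+
qed

end
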